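(* Let $\mathcal{O}$, $\Psi$, $k$ and $\gamma^*=\min\{1+2\gamma_{\max,n},(1+2\gamma(\Psi))^k\}$ be as follows: $\mathcal{O}$ is a nonempty set of quantum channels on $n$ qubits closed under composition, $\Psi$ is a channel on $n$ qubits with $\gamma(\Psi)<\infty$, $k\ge0$ an integer. Let $D$ be any probability distribution on $\mathbb{F}_2^n\times\mathbb{F}_2^n$ and $\delta\in(0,1)$. Then with probability at least $1-\delta$ over $S=(z_1,\ldots,z_m)\sim D^m$, simultaneously for all $\Phi\in\mathcal{O}^{(k)}_\Psi$, \[ er_D(\Phi)\le er_S(\Phi)+2\gamma^*\hat{R}_S(\mathcal{F}(\mathcal{O}))+3\sqrt{\frac{\log(2/\delta)}{2m}}. \]
   Context: A quantum channel on $n$ qubits is a completely positive trace-preserving linear map on $2^n\times2^n$ complex matrices. For a channel $\Phi$, $f_\Phi(x,y)=\mathrm{Tr}[\Phi(|x\rangle\langle x|)\,|y\rangle\langle y|]$ for $x,y\in\mathbb{F}_2^n$; $\mathcal{F}(\Omega)=\{f_\Phi:\Phi\in\Omega\}$. Empirical Rademacher complexity: $\hat{R}_S(\mathcal{G})=\mathbb{E}_{\epsilon}[\sup_{g\in\mathcal{G}}\frac1m\sum_i\epsilon_i g(z_i)]$, $\epsilon_i$ i.i.d. uniform on $\{\pm1\}$. Free robustness w.r.t. $\mathcal{O}$: $\gamma(\Phi)=\inf\{\lambda\ge0:\exists\,\Phi'\in\mathrm{Conv}(\mathcal{O}),\ (\Phi+\lambda\Phi')/(1+\lambda)\in\mathrm{Conv}(\mathcal{O})\}$;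 $\gamma_{\max,n}=\sup$ of $\gamma(\Phi)$ over all channels on $n$ qubits. $\mathcal{O}^{(k)}_\Psi$ is the set of all finite compositions of elements of $\mathcal{O}\cup\{\Psi\}$ in which $\Psi$ appears at most $k$ times. Loss: $l(z,\Phi)=1-f_\Phi(z)$; expected error $er_D(\Phi)=\mathbb{E}_{z\sim D}\,l(z,\Phi)$; empirical error $er_S(\Phi)=\frac1m\sum_{i=1}^m l(z_i,\Phi)$. *)

theory Defs
  imports "HOL-Probability.Probability" "Jordan_Normal_Form.Matrix" "Jordan_Normal_Form.Conjugate"
begin

text \<open>Dimension of the Hilbert space of n qubits; the computational basis
  vectors |x> for x in F_2^n are indexed by the naturals x < 2^n.\<close>
definition qdim :: "nat \<Rightarrow> nat" where
  "qdim n = 2 ^ n"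

definition mtrace :: "complex mat \<Rightarrow> complex" where
  "mtrace A = (\<Sum>i<dim_row A. A $$ (i, i))"

definition psd :: "nat \<Rightarrow> complex mat \<Rightarrow> bool" where
  "psd d A \<longleftrightarrow> A \<in> carrier_mat d d \<and>
     (\<forall>v \<in> carrier_vec d. Im (Matrix.scalar_prod (conjugate v) (mult_mat_vec A v)) = 0 \<and> Re (Matrix.scalar_prod (conjugate v) (mult_mat_vec A v)) \<ge> 0)"

definition block :: "nat \<Rightarrow> complex mat \<Rightarrow> nat \<Rightarrow> nat \<Rightarrow> complex mat" where
  "block d X a b = mat d d (\<lambda>(r, s). X $$ (a * d + r, b * d + s))"

definition id_tensor :: "nat \<Rightarrow> nat \<Rightarrow> (complex mat \<Rightarrow> complex mat) \<Rightarrow> complex mat \<Rightarrow> complex mat" where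
  "id_tensor m d \<Phi> X = mat (m * d) (m * d)
     (\<lambda>(i, j). \<Phi> (block d X (i div d) (j div d)) $$ (i mod d, j mod d))"

definition linear_map_on :: "nat \<Rightarrow> (complex mat \<Rightarrow> complex mat) \<Rightarrow> bool" where
  "linear_map_on d \<Phi> \<longleftrightarrow>
     (\<forall>X \<in> carrier_mat d d. \<forall>Y \<in> carrier_mat d d. \<forall>c::complex.
        \<Phi> (c \<cdot>\<^sub>m X + Y) = c \<cdot>\<^sub>m \<Phi> X + \<Phi> Y)"

definition completely_positive :: "nat \<Rightarrow> (complex mat \<Rightarrow> complex mat) \<Rightarrow> bool" where
  "completely_positive d \<Phi> \<longleftrightarrow>
     (\<forall>m \<ge> 1. \<forall>X. psd (m * d) X \<longrightarrow> psd (m * d) (id_tensor m d \<Phi> X))"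

definition trace_preserving :: "nat \<Rightarrow> (complex mat \<Rightarrow> complex mat) \<Rightarrow> bool" where
  "trace_preserving d \<Phi> \<longleftrightarrow> (\<forall>X \<in> carrier_mat d d. mtrace (\<Phi> X) = mtrace X)"

text \<open>To have a unique HOL representative for each channel, it is required to
  send all matrices of wrong dimension to the zero matrix.\<close>
definition channel :: "nat \<Rightarrow> (complex mat \<Rightarrow> complex mat) \<Rightarrow> bool" where
  "channel n \<Phi> \<longleftrightarrow>
     (\<forall>X \<in> carrier_mat (qdim n) (qdim n). \<Phi> X \<in> carrier_mat (qdim n) (qdim n)) \<and>
     (\<forall>X. X \<notin> carrier_mat (qdim n) (qdim n) \<longrightarrow> \<Phi> X = 0\<^sub>m (qdim n) (qdim n)) \<and>
     linear_map_on (qdim n) \<Phi> \<and>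
     completely_positive (qdim n) \<Phi> \<and>
     trace_preserving (qdim n) \<Phi>"

definition in_conv :: "nat \<Rightarrow> (complex mat \<Rightarrow> complex mat) set \<Rightarrow> (complex mat \<Rightarrow> complex mat) \<Rightarrow> bool" where
  "in_conv n Ofr F \<longleftrightarrow>
     (\<exists>(N::nat) (w::nat \<Rightarrow> real) (G::nat \<Rightarrow> (complex mat \<Rightarrow> complex mat)).
        (\<forall>i<N. G i \<in> Ofr \<and> w i \<ge> 0) \<and> (\<Sum>i<N. w i) = 1 \<and>
        (\<forall>X \<in> carrier_mat (qdim n) (qdim n).
           F X = mat (qdim n) (qdim n) (\<lambda>(r, c). \<Sum>i<N. complex_of_real (w i) * (G i X $$ (r, c)))))"

definition mix :: "nat \<Rightarrow> (complex mat \<Rightarrow> complex mat) \<Rightarrow> real \<Rightarrow> (complex mat \<Rightarrow> complex mat) \<Rightarrow> (complex mat \<Rightarrow> complex mat)" where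
  "mix n \<Phi> l \<Phi>' = (\<lambda>X. mat (qdim n) (qdim n)
      (\<lambda>(r, c). (\<Phi> X $$ (r, c) + complex_of_real l * \<Phi>' X $$ (r, c)) / complex_of_real (1 + l)))"

text \<open>Free robustness \<gamma>(\<Phi>) w.r.t. Ofr (value \<infinity> if no admissible \<lambda> exists).\<close>
definition robustness :: "nat \<Rightarrow> (complex mat \<Rightarrow> complex mat) set \<Rightarrow> (complex mat \<Rightarrow> complex mat) \<Rightarrow> ereal" where
  "robustness n Ofr \<Phi> = Inf {ereal l | l. l \<ge> 0 \<and>
      (\<exists>\<Phi>'. in_conv n Ofr \<Phi>' \<and> in_conv n Ofr (mix n \<Phi> l \<Phi>'))}"

definition gamma_max :: "nat \<Rightarrow> (complex mat \<Rightarrow> complex mat) set \<Rightarrow> ereal" where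
  "gamma_max n Ofr = Sup {robustness n Ofr \<Phi> | \<Phi>. channel n \<Phi>}"

definition gamma_star :: "nat \<Rightarrow> (complex mat \<Rightarrow> complex mat) set \<Rightarrow> (complex mat \<Rightarrow> complex mat) \<Rightarrow> nat \<Rightarrow> ereal" where
  "gamma_star n Ofr \<Psi> k = min (1 + 2 * gamma_max n Ofr) ((1 + 2 * robustness n Ofr \<Psi>) ^ k)"

definition closed_under_comp :: "('a \<Rightarrow> 'a) set \<Rightarrow> bool" where
  "closed_under_comp Ofr \<longleftrightarrow> (\<forall>F \<in> Ofr. \<forall>G \<in> Ofr. F \<circ> G \<in> Ofr)"

definition comps_k :: "('a \<Rightarrow> 'a) set \<Rightarrow> ('a \<Rightarrow> 'a) \<Rightarrow> nat \<Rightarrow> ('a \<Rightarrow> 'a) set" where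
  "comps_k Ofr \<Psi> k = {foldr (\<circ>) Ls id | Ls. Ls \<noteq> [] \<and> set Ls \<subseteq> Ofr \<union> {\<Psi>} \<and>
       length (filter (\<lambda>G. G = \<Psi>) Ls) \<le> k}"

definition basis_proj :: "nat \<Rightarrow> nat \<Rightarrow> complex mat" where
  "basis_proj n x = mat (qdim n) (qdim n) (\<lambda>(i, j). if i = x \<and> j = x then 1 else 0)"

definition f_chan :: "nat \<Rightarrow> (complex mat \<Rightarrow> complex mat) \<Rightarrow> nat \<times> nat \<Rightarrow> real" where
  "f_chan n \<Phi> z = Re (mtrace (\<Phi> (basis_proj n (fst z)) * basis_proj n (snd z)))"

definition fclass :: "nat \<Rightarrow> (complex mat \<Rightarrow> complex mat) set \<Rightarrow> (nat \<times> nat \<Rightarrow> real) set" where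
  "fclass n Ofr = {f_chan n \<Phi> | \<Phi>. \<Phi> \<in> Ofr}"

definition sign_vectors :: "nat \<Rightarrow> real list set" where
  "sign_vectors m = {\<sigma>. length \<sigma> = m \<and> set \<sigma> \<subseteq> {-1, 1}}"

text \<open>Empirical Rademacher complexity; the expectation over uniform \<epsilon> \<in> {\<plusminus>1}^m is the
  average over all 2^m sign vectors.\<close>
definition emp_rademacher :: "('z \<Rightarrow> real) set \<Rightarrow> 'z list \<Rightarrow> real" where
  "emp_rademacher G S =
     (\<Sum>\<sigma> \<in> sign_vectors (length S).
        Sup {(\<Sum>i<length S. \<sigma> ! i * g (S ! i)) / real (length S) | g. g \<in> G})
     / 2 ^ length S"

definition loss :: "nat \<Rightarrow> nat \<times> nat \<Rightarrow> (complex mat \<Rightarrow> complex mat) \<Rightarrow> real" where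
  "loss n z \<Phi> = 1 - f_chan n \<Phi> z"

definition er_D :: "nat \<Rightarrow> (nat \<times> nat) pmf \<Rightarrow> (complex mat \<Rightarrow> complex mat) \<Rightarrow> real" where
  "er_D n D \<Phi> = measure_pmf.expectation D (\<lambda>z. loss n z \<Phi>)"

definition er_S :: "nat \<Rightarrow> (nat \<times> nat) list \<Rightarrow> (complex mat \<Rightarrow> complex mat) \<Rightarrow> real" where
  "er_S n S \<Phi> = (\<Sum>i<length S. loss n (S ! i) \<Phi>) / real (length S)"

fun iid_sample :: "'a pmf \<Rightarrow> nat \<Rightarrow> 'a list pmf" where
  "iid_sample D 0 = return_pmf []"
| "iid_sample D (Suc m) = bind_pmf D (\<lambda>z. map_pmf (\<lambda>zs. z # zs) (iid_sample D m))"

end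

(*
  For any class of [0,1]-valued functions, symmetrization and McDiarmid's inequality give
  with probability 1 - delta the uniform bound  E g <= E_S g + 2 R_S + 3 sqrt (log (2/delta) / (2m)).
  It remains to compare the Rademacher complexity of the losses of O^(k)_Psi with that of F(O).
  If gamma(Phi) < l, then Phi = (1 + l) Phi_1 - l Phi_2 with Phi_1, Phi_2 in Conv(O): a
  quasi-probability decomposition of Phi over O whose coefficients have l1-norm at most 1 + 2 l.
  As O is closed under composition, such decompositions compose with multiplicative norms, so
  every element of O^(k)_Psi has one of norm (1 + 2 gamma(Psi))^k, and also one of norm
  1 + 2 gamma_max. Finally, if every member of a class is 1 - sum_i a_i f_i with f_i in F(O),
  sum_i a_i = 1 and sum_i |a_i| <= c, splitting the a_i into positive and negative parts bounds
  its Rademacher complexity by c R_S(F(O)).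
*)

theory Submission
  imports Defs
begin

abbreviation expect :: "'a pmf \<Rightarrow> ('a \<Rightarrow> real) \<Rightarrow> real" where
  "expect M f \<equiv> measure_pmf.expectation M f"

declare integrable_measure_pmf_finite[intro, simp]

lemma set_pmf_iid_sample:
  "set_pmf (iid_sample D m) \<subseteq> {xs. length xs = m \<and> set xs \<subseteq> set_pmf D}"
  by (induction m) fastforce+

lemma finite_set_pmf_iid_sample:
  "finite (set_pmf D) \<Longrightarrow> finite (set_pmf (iid_sample D m))"
  by (rule finite_subset[of _ "{xs. set xs \<subseteq> set_pmf D \<and> length xs = m}"])
     (use set_pmf_iid_sample in \<open>auto intro: finite_lists_length_eq\<close>)

lemma expect_finite_pmf:
  "finite (set_pmf M) \<Longrightarrow> expect M f = (\<Sum>x\<in>set_pmf M. f x * pmf M x)"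
  by (rule integral_measure_pmf_real) auto

lemma expect_bind_pmf_finite:
  assumes fM: "finite (set_pmf M)" and fN: "\<And>x. x \<in> set_pmf M \<Longrightarrow> finite (set_pmf (N x))"
  shows "expect (bind_pmf M N) f = expect M (\<lambda>x. expect (N x) f)"
proof -
  define B where "B = (\<Union>x\<in>set_pmf M. set_pmf (N x))"
  have fB: "finite B" unfolding B_def by (rule finite_UN_I[OF fM fN])
  have inner: "expect (N x) f = (\<Sum>y\<in>B. f y * pmf (N x) y)" if "x \<in> set_pmf M" for x
    by (rule integral_measure_pmf_real) (use that fB in \<open>auto simp: B_def\<close>)
  have "expect (bind_pmf M N) f = (\<Sum>y\<in>B. f y * pmf (bind_pmf M N) y)"
    by (rule integral_measure_pmf_real[OF fB]) (auto simp: B_def)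
  also have "\<dots> = (\<Sum>y\<in>B. f y * (\<Sum>x\<in>set_pmf M. pmf (N x) y * pmf M x))"
    by (intro sum.cong refl) (simp add: pmf_bind expect_finite_pmf[OF fM])
  also have "\<dots> = (\<Sum>x\<in>set_pmf M. (\<Sum>y\<in>B. f y * pmf (N x) y) * pmf M x)"
    by (simp add: sum_distrib_left sum_distrib_right mult.assoc sum.swap[of _ B])
  also have "\<dots> = expect M (\<lambda>x. expect (N x) f)"
    by (simp add: expect_finite_pmf[OF fM] inner)
  finally show ?thesis .
qed

lemma expect_swap_finite:
  assumes "finite (set_pmf A)" "finite (set_pmf B)"
  shows "expect A (\<lambda>x. expect B (\<lambda>y. h x y)) = expect B (\<lambda>y. expect A (\<lambda>x. h x y))"
  using assms by (simp add: expect_finite_pmf sum_distrib_right mult_ac sum_distrib_left)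
     (rule sum.swap)

lemma expect_iid_sample_Suc:
  assumes "finite (set_pmf D)"
  shows "expect (iid_sample D (Suc m)) f = expect D (\<lambda>z. expect (iid_sample D m) (\<lambda>xs. f (z # xs)))"
  using assms by (simp add: expect_bind_pmf_finite finite_set_pmf_iid_sample)

lemma map_pmf_nth_iid_sample: "i < m \<Longrightarrow> map_pmf (\<lambda>xs. xs ! i) (iid_sample D m) = D"
proof (induction m arbitrary: i)
  case (Suc m)
  then show ?case
    by (cases i) (simp_all add: map_bind_pmf pmf.map_comp o_def map_pmf_const bind_return_pmf')
qed simp

lemma expect_iid_sample_nth: "i < m \<Longrightarrow> expect (iid_sample D m) (\<lambda>xs. g (xs ! i)) = expect D g"
  by (metis integral_map_pmf map_pmf_nth_iid_sample)

lemma measure_pmf_prob_mono_on_support: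
  "A \<inter> set_pmf M \<subseteq> B \<Longrightarrow> measure_pmf.prob M A \<le> measure_pmf.prob M B"
  by (metis measure_Int_set_pmf measure_pmf.finite_measure_mono sets_measure_pmf UNIV_I)

subsection \<open>McDiarmid's inequality\<close>

definition bounded_differences :: "'a pmf \<Rightarrow> nat \<Rightarrow> real \<Rightarrow> ('a list \<Rightarrow> real) \<Rightarrow> bool" where
  "bounded_differences D m c f \<longleftrightarrow>
     (\<forall>xs ys i. length xs = m \<longrightarrow> length ys = m \<longrightarrow> set xs \<subseteq> set_pmf D \<longrightarrow>
        set ys \<subseteq> set_pmf D \<longrightarrow> i < m \<longrightarrow> (\<forall>j<m. j \<noteq> i \<longrightarrow> xs ! j = ys ! j) \<longrightarrow> f xs - f ys \<le> c)"

lemma bounded_differences_Cons: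
  assumes "bounded_differences D (Suc m) c f" "z \<in> set_pmf D"
  shows "bounded_differences D m c (\<lambda>xs. f (z # xs))"
  unfolding bounded_differences_def
proof (intro allI impI)
  fix xs ys i
  assume h: "length xs = m" "length ys = m" "set xs \<subseteq> set_pmf D" "set ys \<subseteq> set_pmf D" "i < m"
    "\<forall>j<m. j \<noteq> i \<longrightarrow> xs ! j = ys ! j"
  have "\<forall>j<Suc m. j \<noteq> Suc i \<longrightarrow> (z # xs) ! j = (z # ys) ! j"
    using h(6) by (auto simp: less_Suc_eq_0_disj)
  then show "f (z # xs) - f (z # ys) \<le> c"
    using assms h unfolding bounded_differences_def
    by (metis Suc_less_eq insert_subset length_Cons list.simps(15))
qed

lemma bounded_differences_first:
  assumes "bounded_differences D (Suc m) c f" "z \<in> set_pmf D" "z' \<in> set_pmf D"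
    and "length xs = m" "set xs \<subseteq> set_pmf D"
  shows "f (z # xs) - f (z' # xs) \<le> c"
proof -
  have "\<forall>j<Suc m. j \<noteq> 0 \<longrightarrow> (z # xs) ! j = (z' # xs) ! j" by (auto simp: less_Suc_eq_0_disj)
  then show ?thesis
    using assms unfolding bounded_differences_def
    by (metis insert_subset length_Cons list.simps(15) zero_less_Suc)
qed

lemma hoeffding_lemma_finite_pmf:
  assumes fin: "finite (set_pmf D)" and l: "l > 0"
    and osc: "\<And>z z'. z \<in> set_pmf D \<Longrightarrow> z' \<in> set_pmf D \<Longrightarrow> g z - g z' \<le> c"
  shows "expect D (\<lambda>z. exp (l * (g z - expect D g))) \<le> exp (l\<^sup>2 * c\<^sup>2 / 8)"
proof -
  define a where "a = Min (g ` set_pmf D)"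
  obtain z0 where z0: "z0 \<in> set_pmf D" "a = g z0"
    using Min_in[of "g ` set_pmf D"] fin set_pmf_not_empty unfolding a_def by fastforce
  have "g z \<in> {a..a + c}" if "z \<in> set_pmf D" for z
    using osc[OF that z0(1)] z0(2) fin that Min_le[of "g ` set_pmf D" "g z"] unfolding a_def by auto
  then interpret interval_bounded_random_variable "measure_pmf D" g a "a + c"
    by unfold_locales (auto simp: AE_measure_pmf_iff)
  have "ennreal (expect D (\<lambda>z. exp (l * (g z - expect D g))))
      = (\<integral>\<^sup>+z. exp (l * (g z - expect D g)) \<partial>measure_pmf D)"
    by (rule nn_integral_eq_integral[symmetric]) (use fin in auto)
  also have "\<dots> \<le> ennreal (exp (l\<^sup>2 * (a + c - a)\<^sup>2 / 8))"
    by (rule Hoeffdings_lemma_nn_integral[OF l])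
  finally show ?thesis by (simp add: ennreal_le_iff)
qed

text \<open>Peel off the first coordinate: its conditional expectation has oscillation at most \<open>c\<close>,
  so Hoeffding's lemma applies to it, and induction handles the remaining coordinates.\<close>

lemma iid_sample_mgf_bound:
  assumes fin: "finite (set_pmf D)" and l: "l > 0"
  shows "bounded_differences D m c f \<Longrightarrow>
    expect (iid_sample D m) (\<lambda>xs. exp (l * (f xs - expect (iid_sample D m) f)))
      \<le> exp (l\<^sup>2 * (real m * c\<^sup>2) / 8)"
proof (induction m arbitrary: f)
  case 0 then show ?case by simp
next
  case (Suc m)
  define I where "I = iid_sample D m"
  have fI: "finite (set_pmf I)" using fin finite_set_pmf_iid_sample I_def by blast
  define g where "g z = expect I (\<lambda>xs. f (z # xs))" for z
  define K where "K = exp (l\<^sup>2 * (real m * c\<^sup>2) / 8)"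
  have mean: "expect (iid_sample D (Suc m)) f = expect D g"
    unfolding g_def I_def by (rule expect_iid_sample_Suc[OF fin])
  have IH: "expect I (\<lambda>xs. exp (l * (f (z # xs) - g z))) \<le> K" if "z \<in> set_pmf D" for z
    using Suc.IH[OF bounded_differences_Cons[OF Suc.prems that]] by (simp add: g_def I_def K_def)
  have osc: "g z - g z' \<le> c" if "z \<in> set_pmf D" "z' \<in> set_pmf D" for z z'
  proof -
    have "g z - g z' = expect I (\<lambda>xs. f (z # xs) - f (z' # xs))" by (simp add: g_def fI)
    also have "\<dots> \<le> expect I (\<lambda>xs. c)"
      using set_pmf_iid_sample[of D m] bounded_differences_first[OF Suc.prems that]
      by (intro integral_mono_AE) (auto simp: AE_measure_pmf_iff I_def finite_set_pmf_iid_sample[OF fin])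
    finally show ?thesis by simp
  qed
  have "expect (iid_sample D (Suc m)) (\<lambda>xs. exp (l * (f xs - expect (iid_sample D (Suc m)) f)))
      = expect D (\<lambda>z. exp (l * (g z - expect D g)) * expect I (\<lambda>xs. exp (l * (f (z # xs) - g z))))"
  proof -
    have "exp (l * (f (z # xs) - expect D g))
        = exp (l * (g z - expect D g)) * exp (l * (f (z # xs) - g z))" for z xs
      by (simp add: exp_add[symmetric] algebra_simps)
    then show ?thesis
      by (simp only: mean, simp only: expect_iid_sample_Suc[OF fin] flip: I_def) simp
  qed
  also have "\<dots> \<le> expect D (\<lambda>z. exp (l * (g z - expect D g)) * K)"
    using IH by (intro integral_mono_AE) (auto simp: AE_measure_pmf_iff fin intro: mult_left_mono)
  also have "\<dots> = expect D (\<lambda>z. exp (l * (g z - expect D g))) * K" by simp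
  also have "\<dots> \<le> exp (l\<^sup>2 * c\<^sup>2 / 8) * K"
    by (rule mult_right_mono[OF hoeffding_lemma_finite_pmf[OF fin l osc]]) (simp_all add: K_def)
  also have "\<dots> = exp (l\<^sup>2 * (real (Suc m) * c\<^sup>2) / 8)"
    by (simp add: K_def exp_add[symmetric] algebra_simps add_divide_distrib)
  finally show ?case .
qed

theorem mcdiarmid_inequality:
  assumes fin: "finite (set_pmf D)" and m: "m > 0" and c: "c > 0" and t: "t > 0"
    and bd: "bounded_differences D m c f"
  shows "measure_pmf.prob (iid_sample D m) {xs. f xs - expect (iid_sample D m) f \<ge> t}
           \<le> exp (-2 * t\<^sup>2 / (real m * c\<^sup>2))"
proof -
  define M where "M = iid_sample D m"
  define l where "l = 4 * t / (real m * c\<^sup>2)"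
  have l: "l > 0" using m c t by (simp add: l_def)
  have "{xs. f xs - expect M f \<ge> t}
      = {xs \<in> space (measure_pmf M). exp (l * (f xs - expect M f)) \<ge> exp (l * t)}"
    using l by auto
  then have "measure_pmf.prob M {xs. f xs - expect M f \<ge> t}
      \<le> expect M (\<lambda>xs. exp (l * (f xs - expect M f))) / exp (l * t)"
    using finite_set_pmf_iid_sample[OF fin]
    by (simp only:) (rule integral_Markov_inequality_measure, auto simp: M_def)
  also have "\<dots> \<le> exp (l\<^sup>2 * (real m * c\<^sup>2) / 8) / exp (l * t)"
    by (rule divide_right_mono) (use iid_sample_mgf_bound[OF fin l bd] M_def in auto)
  also have "\<dots> = exp (-2 * t\<^sup>2 / (real m * c\<^sup>2))"
    using m c by (simp add: exp_diff[symmetric] l_def field_simps power2_eq_square)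
  finally show ?thesis by (simp add: M_def)
qed

subsection \<open>Rademacher complexity and uniform deviation\<close>

lemma sign_vectors_card: "card (sign_vectors m) = 2 ^ m"
proof -
  have "sign_vectors m = {xs. set xs \<subseteq> {-1, 1::real} \<and> length xs = m}"
    by (auto simp: sign_vectors_def)
  then show ?thesis by (simp add: card_lists_length_eq numeral_2_eq_2)
qed

lemma sign_vectors_length: "\<sigma> \<in> sign_vectors m \<Longrightarrow> length \<sigma> = m"
  by (simp add: sign_vectors_def)

lemma sign_vectors_nth: "\<sigma> \<in> sign_vectors m \<Longrightarrow> i < m \<Longrightarrow> \<sigma> ! i = 1 \<or> \<sigma> ! i = -1"
  unfolding sign_vectors_def using nth_mem by fastforce

lemma map_uminus_sign_vectors: "\<sigma> \<in> sign_vectors m \<Longrightarrow> map uminus \<sigma> \<in> sign_vectors m"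
  unfolding sign_vectors_def by auto

lemma sum_sign_vectors_uminus:
  "(\<Sum>\<sigma>\<in>sign_vectors m. h (map uminus \<sigma>)) = (\<Sum>\<sigma>\<in>sign_vectors m. h \<sigma>)"
  by (rule sum.reindex_bij_witness[of _ "map uminus" "map uminus"])
     (auto simp: map_uminus_sign_vectors o_def)

lemma cSUP_upper_abs_bounded:
  fixes u :: "'b \<Rightarrow> real"
  assumes "\<And>g. g \<in> G \<Longrightarrow> \<bar>u g\<bar> \<le> B" "g \<in> G"
  shows "u g \<le> Sup (u ` G)"
  by (rule cSUP_upper) (use assms in \<open>auto intro!: bdd_aboveI2[where M=B] dest: abs_le_D1\<close>)

lemma cSUP_le_cSUP_add:
  fixes u v :: "'b \<Rightarrow> real"
  assumes "G \<noteq> {}" "\<And>g. g \<in> G \<Longrightarrow> \<bar>v g\<bar> \<le> B" "\<And>g. g \<in> G \<Longrightarrow> u g \<le> v g + c"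
  shows "Sup (u ` G) \<le> Sup (v ` G) + c"
proof (rule cSUP_least)
  fix g assume g: "g \<in> G"
  have "v g \<le> Sup (v ` G)" by (rule cSUP_upper_abs_bounded[OF assms(2) g])
  then show "u g \<le> Sup (v ` G) + c" using assms(3)[OF g] by linarith
qed (use assms in auto)

lemma sum_diff_agree_except:
  fixes h :: "nat \<Rightarrow> 'a \<Rightarrow> real"
  assumes "i < m" "\<forall>j<m. j \<noteq> i \<longrightarrow> xs ! j = ys ! j"
  shows "(\<Sum>j<m. h j (xs ! j)) - (\<Sum>j<m. h j (ys ! j)) = h i (xs ! i) - h i (ys ! i)"
proof -
  have "(\<Sum>j<m. h j (xs ! j)) - (\<Sum>j<m. h j (ys ! j))
      = (\<Sum>j<m. if j = i then h i (xs ! i) - h i (ys ! i) else 0)"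
    unfolding sum_subtractf[symmetric] by (intro sum.cong refl) (use assms in auto)
  then show ?thesis using assms by simp
qed

text \<open>The sample size is kept as a parameter \<open>m\<close> (rather than \<open>length S\<close>), so that these
  quantities are functions on lists of length \<open>m\<close> to which McDiarmid's inequality applies.\<close>

definition emp_mean :: "nat \<Rightarrow> ('a \<Rightarrow> real) \<Rightarrow> 'a list \<Rightarrow> real" where
  "emp_mean m g S = (\<Sum>i<m. g (S ! i)) / real m"

definition rademacher_corr :: "nat \<Rightarrow> ('a \<Rightarrow> real) set \<Rightarrow> real list \<Rightarrow> 'a list \<Rightarrow> real" where
  "rademacher_corr m G \<sigma> S = Sup ((\<lambda>g. (\<Sum>i<m. \<sigma> ! i * g (S ! i)) / real m) ` G)"

definition rademacher :: "nat \<Rightarrow> ('a \<Rightarrow> real) set \<Rightarrow> 'a list \<Rightarrow> real" where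
  "rademacher m G S = (\<Sum>\<sigma>\<in>sign_vectors m. rademacher_corr m G \<sigma> S) / 2 ^ m"

definition sup_deviation :: "'a pmf \<Rightarrow> nat \<Rightarrow> ('a \<Rightarrow> real) set \<Rightarrow> 'a list \<Rightarrow> real" where
  "sup_deviation D m G S = Sup ((\<lambda>g. expect D g - emp_mean m g S) ` G)"

lemma emp_rademacher_eq_rademacher: "length S = m \<Longrightarrow> emp_rademacher G S = rademacher m G S"
  unfolding emp_rademacher_def rademacher_def rademacher_corr_def by (simp add: Setcompr_eq_image)

locale unit_valued_class =
  fixes D :: "'a pmf" and G :: "('a \<Rightarrow> real) set" and m :: nat
  assumes finite_support: "finite (set_pmf D)"
    and class_nonempty: "G \<noteq> {}"
    and unit_valued: "\<And>g z. g \<in> G \<Longrightarrow> z \<in> set_pmf D \<Longrightarrow> 0 \<le> g z \<and> g z \<le> 1"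
    and sample_size_pos: "m > 0"
begin

lemma finite_set_pmf_sample: "finite (set_pmf (iid_sample D m))"
  by (rule finite_set_pmf_iid_sample[OF finite_support])

lemma unit_valued_nth:
  "g \<in> G \<Longrightarrow> set S \<subseteq> set_pmf D \<Longrightarrow> i < length S \<Longrightarrow> 0 \<le> g (S ! i) \<and> g (S ! i) \<le> 1"
  using unit_valued nth_mem by blast

lemma expect_unit_valued:
  assumes g: "g \<in> G"
  shows "0 \<le> expect D g \<and> expect D g \<le> 1"
proof
  show "0 \<le> expect D g"
    by (rule integral_nonneg_AE) (simp add: AE_measure_pmf_iff unit_valued[OF g])
  have "expect D g \<le> expect D (\<lambda>_. 1)"
    by (rule integral_mono_AE) (simp_all add: AE_measure_pmf_iff unit_valued[OF g] finite_support)
  then show "expect D g \<le> 1" by simp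
qed

lemma emp_mean_unit_valued:
  assumes "g \<in> G" "length S = m" "set S \<subseteq> set_pmf D"
  shows "0 \<le> emp_mean m g S \<and> emp_mean m g S \<le> 1"
proof -
  have b: "0 \<le> g (S ! i) \<and> g (S ! i) \<le> 1" if "i < m" for i
    using unit_valued_nth[OF assms(1,3)] assms(2) that by simp
  have "0 \<le> (\<Sum>i<m. g (S ! i))" using b by (intro sum_nonneg) auto
  moreover have "(\<Sum>i<m. g (S ! i)) \<le> (\<Sum>i<m. 1)" using b by (intro sum_mono) auto
  ultimately show ?thesis using sample_size_pos by (simp add: emp_mean_def divide_le_eq_1)
qed

lemma abs_signed_mean_le_1:
  assumes "\<sigma> \<in> sign_vectors m" "g \<in> G" "length S = m" "set S \<subseteq> set_pmf D"
  shows "\<bar>(\<Sum>i<m. \<sigma> ! i * g (S ! i)) / real m\<bar> \<le> 1"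
proof -
  have "\<bar>\<sigma> ! i * g (S ! i)\<bar> \<le> 1" if "i < m" for i
    using unit_valued_nth[OF assms(2,4), of i] sign_vectors_nth[OF assms(1) that] that assms(3)
    by (auto simp: abs_mult)
  then have "\<bar>\<Sum>i<m. \<sigma> ! i * g (S ! i)\<bar> \<le> (\<Sum>i<m. 1)"
    by (intro order_trans[OF sum_abs] sum_mono) simp
  then show ?thesis using sample_size_pos by (simp add: divide_le_eq_1)
qed

lemma signed_mean_le_rademacher_corr:
  assumes "\<sigma> \<in> sign_vectors m" "g \<in> G" "length S = m" "set S \<subseteq> set_pmf D"
  shows "(\<Sum>i<m. \<sigma> ! i * g (S ! i)) / real m \<le> rademacher_corr m G \<sigma> S"
  unfolding rademacher_corr_def
  by (rule cSUP_upper_abs_bounded[OF abs_signed_mean_le_1[OF assms(1) _ assms(3,4)] assms(2)])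

lemma rademacher_corr_add_uminus_nonneg:
  assumes \<sigma>: "\<sigma> \<in> sign_vectors m" and S: "length S = m" "set S \<subseteq> set_pmf D"
  shows "0 \<le> rademacher_corr m G \<sigma> S + rademacher_corr m G (map uminus \<sigma>) S"
proof -
  obtain g where g: "g \<in> G" using class_nonempty by auto
  have "(\<Sum>i<m. map uminus \<sigma> ! i * g (S ! i)) = - (\<Sum>i<m. \<sigma> ! i * g (S ! i))"
    using sign_vectors_length[OF \<sigma>] by (simp add: sum_negf[symmetric])
  then show ?thesis
    using signed_mean_le_rademacher_corr[OF \<sigma> g S]
      signed_mean_le_rademacher_corr[OF map_uminus_sign_vectors[OF \<sigma>] g S]
    by (simp add: minus_divide_left[symmetric])
qed

lemma sup_deviation_bounded_differences: "bounded_differences D m (1 / real m) (sup_deviation D m G)"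
  unfolding bounded_differences_def
proof (intro allI impI)
  fix xs ys i
  assume h: "length xs = m" "length ys = m" "set xs \<subseteq> set_pmf D" "set ys \<subseteq> set_pmf D" "i < m"
    "\<forall>j<m. j \<noteq> i \<longrightarrow> xs ! j = ys ! j"
  have "sup_deviation D m G xs \<le> sup_deviation D m G ys + 1 / real m"
    unfolding sup_deviation_def
  proof (rule cSUP_le_cSUP_add[OF class_nonempty])
    fix g assume g: "g \<in> G"
    show "\<bar>expect D g - emp_mean m g ys\<bar> \<le> 1"
      using expect_unit_valued[OF g] emp_mean_unit_valued[OF g h(2) h(4)] by linarith
    have "emp_mean m g ys - emp_mean m g xs = (g (ys ! i) - g (xs ! i)) / real m"
      unfolding emp_mean_def diff_divide_distrib[symmetric]
      using sum_diff_agree_except[OF h(5), of ys xs "\<lambda>j x. g x"] h(6) by auto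
    also have "\<dots> \<le> 1 / real m"
      using unit_valued_nth[OF g h(4), of i] unit_valued_nth[OF g h(3), of i] h sample_size_pos
      by (intro divide_right_mono) auto
    finally show "expect D g - emp_mean m g xs \<le> expect D g - emp_mean m g ys + 1 / real m"
      by linarith
  qed
  then show "sup_deviation D m G xs - sup_deviation D m G ys \<le> 1 / real m" by linarith
qed

lemma rademacher_corr_le_add:
  assumes \<sigma>: "\<sigma> \<in> sign_vectors m" and h: "length xs = m" "length ys = m" "set xs \<subseteq> set_pmf D"
    "set ys \<subseteq> set_pmf D" "i < m" "\<forall>j<m. j \<noteq> i \<longrightarrow> xs ! j = ys ! j"
  shows "rademacher_corr m G \<sigma> xs \<le> rademacher_corr m G \<sigma> ys + 1 / real m"
  unfolding rademacher_corr_def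
proof (rule cSUP_le_cSUP_add[OF class_nonempty])
  fix g assume g: "g \<in> G"
  show "\<bar>(\<Sum>i<m. \<sigma> ! i * g (ys ! i)) / real m\<bar> \<le> 1" by (rule abs_signed_mean_le_1[OF \<sigma> g h(2) h(4)])
  have "(\<Sum>j<m. \<sigma> ! j * g (xs ! j)) - (\<Sum>j<m. \<sigma> ! j * g (ys ! j)) = \<sigma> ! i * g (xs ! i) - \<sigma> ! i * g (ys ! i)"
    by (rule sum_diff_agree_except[OF h(5) h(6)])
  also have "\<dots> \<le> 1"
    using unit_valued_nth[OF g h(4), of i] unit_valued_nth[OF g h(3), of i] sign_vectors_nth[OF \<sigma> h(5)] h
    by auto
  finally show "(\<Sum>j<m. \<sigma> ! j * g (xs ! j)) / real m \<le> (\<Sum>j<m. \<sigma> ! j * g (ys ! j)) / real m + 1 / real m"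
    using sample_size_pos by (simp add: add_divide_distrib[symmetric] divide_right_mono)
qed

lemma rademacher_le_add:
  assumes "length xs = m" "length ys = m" "set xs \<subseteq> set_pmf D"
    "set ys \<subseteq> set_pmf D" "i < m" "\<forall>j<m. j \<noteq> i \<longrightarrow> xs ! j = ys ! j"
  shows "rademacher m G xs \<le> rademacher m G ys + 1 / real m"
proof -
  have "(\<Sum>\<sigma>\<in>sign_vectors m. rademacher_corr m G \<sigma> xs)
      \<le> (\<Sum>\<sigma>\<in>sign_vectors m. rademacher_corr m G \<sigma> ys + 1 / real m)"
    by (intro sum_mono rademacher_corr_le_add[OF _ assms])
  also have "\<dots> = (\<Sum>\<sigma>\<in>sign_vectors m. rademacher_corr m G \<sigma> ys) + 2 ^ m * (1 / real m)"
    by (simp add: sum.distrib sign_vectors_card)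
  finally have "(\<Sum>\<sigma>\<in>sign_vectors m. rademacher_corr m G \<sigma> xs) / 2 ^ m
      \<le> ((\<Sum>\<sigma>\<in>sign_vectors m. rademacher_corr m G \<sigma> ys) + 2 ^ m * (1 / real m)) / 2 ^ m"
    by (rule divide_right_mono) simp
  then show ?thesis unfolding rademacher_def by (simp add: add_divide_distrib)
qed

lemma uminus_rademacher_bounded_differences:
  "bounded_differences D m (1 / real m) (\<lambda>S. - rademacher m G S)"
  unfolding bounded_differences_def
proof (intro allI impI)
  fix xs ys i
  assume h: "length xs = m" "length ys = m" "set xs \<subseteq> set_pmf D" "set ys \<subseteq> set_pmf D" "i < m"
    "\<forall>j<m. j \<noteq> i \<longrightarrow> xs ! j = ys ! j"
  have "\<forall>j<m. j \<noteq> i \<longrightarrow> ys ! j = xs ! j" using h(6) by auto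
  from rademacher_le_add[OF h(2) h(1) h(4) h(3) h(5) this]
  show "- rademacher m G xs - - rademacher m G ys \<le> 1 / real m" by linarith
qed

lemma expect_emp_mean: "expect (iid_sample D m) (emp_mean m g) = expect D g"
proof -
  have "expect (iid_sample D m) (emp_mean m g) = (\<Sum>i<m. expect (iid_sample D m) (\<lambda>S. g (S ! i))) / real m"
    unfolding emp_mean_def by (simp add: finite_set_pmf_sample)
  also have "\<dots> = expect D g" using sample_size_pos by (simp add: expect_iid_sample_nth)
  finally show ?thesis .
qed

end

subsection \<open>Symmetrization\<close>

fun swap_by_signs :: "real list \<Rightarrow> ('a \<times> 'a) list \<Rightarrow> ('a \<times> 'a) list" where
  "swap_by_signs (s # \<sigma>) (p # ps) = (if s = 1 then p else prod.swap p) # swap_by_signs \<sigma> ps"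
| "swap_by_signs _ _ = []"

lemma length_swap_by_signs:
  "length \<sigma> = length ps \<Longrightarrow> length (swap_by_signs \<sigma> ps) = length ps"
  by (induction \<sigma> ps rule: swap_by_signs.induct) auto

lemma nth_swap_by_signs:
  "length \<sigma> = length ps \<Longrightarrow> i < length ps \<Longrightarrow>
    swap_by_signs \<sigma> ps ! i = (if \<sigma> ! i = 1 then ps ! i else prod.swap (ps ! i))"
  by (induction \<sigma> ps arbitrary: i rule: swap_by_signs.induct) (auto simp: nth_Cons split: nat.splits)

lemma map_pmf_swap_pair_pmf: "map_pmf prod.swap (pair_pmf A A) = pair_pmf A A"
proof -
  have "prod.swap = (\<lambda>(x::'a, y::'a). (y, x))" by (auto simp: fun_eq_iff)
  then show ?thesis by (metis pair_commute_pmf)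
qed

lemma map_pmf_swap_by_signs_iid_sample:
  "length \<sigma> = m \<Longrightarrow>
    map_pmf (swap_by_signs \<sigma>) (iid_sample (pair_pmf D D) m) = iid_sample (pair_pmf D D) m"
proof (induction m arbitrary: \<sigma>)
  case (Suc m)
  then obtain s \<sigma>' where \<sigma>: "\<sigma> = s # \<sigma>'" "length \<sigma>' = m" by (cases \<sigma>) auto
  define h where "h = (\<lambda>p::'a \<times> 'a. if s = 1 then p else prod.swap p)"
  have h: "map_pmf h (pair_pmf D D) = pair_pmf D D"
    by (cases "s = 1") (simp_all add: h_def map_pmf_swap_pair_pmf)
  have "map_pmf (swap_by_signs \<sigma>) (iid_sample (pair_pmf D D) (Suc m))
      = bind_pmf (pair_pmf D D)
          (\<lambda>p. map_pmf ((#) (h p)) (map_pmf (swap_by_signs \<sigma>') (iid_sample (pair_pmf D D) m)))"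
    by (simp add: \<sigma> map_bind_pmf pmf.map_comp o_def h_def)
  also have "\<dots> = bind_pmf (map_pmf h (pair_pmf D D)) (\<lambda>q. map_pmf ((#) q) (iid_sample (pair_pmf D D) m))"
    using Suc.IH[OF \<sigma>(2)] by (simp add: bind_map_pmf)
  finally show ?case by (simp add: h)
qed simp

lemma expect_pair_pmf:
  "finite (set_pmf D) \<Longrightarrow> expect (pair_pmf D D) h = expect D (\<lambda>a. expect D (\<lambda>b. h (a, b)))"
  unfolding pair_pmf_def by (simp add: expect_bind_pmf_finite)

lemma expect_iid_sample_pair_pmf:
  assumes fin: "finite (set_pmf D)"
  shows "expect (iid_sample (pair_pmf D D) m) (\<lambda>ps. F (map fst ps) (map snd ps))
       = expect (iid_sample D m) (\<lambda>S. expect (iid_sample D m) (\<lambda>S'. F S S'))"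
proof (induction m arbitrary: F)
  case (Suc m)
  define I where "I = iid_sample D m"
  have swap: "expect I (\<lambda>S. expect D (\<lambda>b. H S b)) = expect D (\<lambda>b. expect I (\<lambda>S. H S b))" for H
    unfolding I_def by (rule expect_swap_finite[OF finite_set_pmf_iid_sample[OF fin] fin])
  have "expect (iid_sample (pair_pmf D D) (Suc m)) (\<lambda>ps. F (map fst ps) (map snd ps))
      = expect (pair_pmf D D)
          (\<lambda>p. expect (iid_sample (pair_pmf D D) m) (\<lambda>ps. F (fst p # map fst ps) (snd p # map snd ps)))"
    using expect_iid_sample_Suc[of "pair_pmf D D" m "\<lambda>ps. F (map fst ps) (map snd ps)"] fin by simp
  also have "\<dots> = expect (pair_pmf D D) (\<lambda>p. expect I (\<lambda>S. expect I (\<lambda>S'. F (fst p # S) (snd p # S'))))"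
    unfolding I_def by (intro Bochner_Integration.integral_cong refl Suc.IH)
  also have "\<dots> = expect D (\<lambda>a. expect I (\<lambda>S. expect D (\<lambda>b. expect I (\<lambda>S'. F (a # S) (b # S')))))"
    by (simp add: expect_pair_pmf[OF fin] swap)
  also have "\<dots> = expect (iid_sample D (Suc m)) (\<lambda>S. expect (iid_sample D (Suc m)) (\<lambda>S'. F S S'))"
    by (simp only: expect_iid_sample_Suc[OF fin] I_def)
  finally show ?case .
qed simp

definition ghost_gap :: "nat \<Rightarrow> ('a \<Rightarrow> real) set \<Rightarrow> 'a list \<Rightarrow> 'a list \<Rightarrow> real" where
  "ghost_gap m G S S' = Sup ((\<lambda>g. emp_mean m g S' - emp_mean m g S) ` G)"

definition signed_gap :: "nat \<Rightarrow> ('a \<Rightarrow> real) set \<Rightarrow> real list \<Rightarrow> ('a \<times> 'a) list \<Rightarrow> real" where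
  "signed_gap m G \<sigma> ps = Sup ((\<lambda>g. (\<Sum>i<m. \<sigma> ! i * (g (snd (ps ! i)) - g (fst (ps ! i)))) / real m) ` G)"

context unit_valued_class
begin

lemma sup_deviation_le_expect_ghost_gap:
  assumes S: "S \<in> set_pmf (iid_sample D m)"
  shows "sup_deviation D m G S \<le> expect (iid_sample D m) (ghost_gap m G S)"
  unfolding sup_deviation_def
proof (rule cSUP_least[OF class_nonempty])
  fix g assume g: "g \<in> G"
  have S: "length S = m" "set S \<subseteq> set_pmf D" using S set_pmf_iid_sample by blast+
  have bound: "\<bar>emp_mean m h S' - emp_mean m h S\<bar> \<le> 1"
    if "S' \<in> set_pmf (iid_sample D m)" "h \<in> G" for S' h
  proof -
    have "length S' = m" "set S' \<subseteq> set_pmf D" using that(1) set_pmf_iid_sample by blast+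
    from emp_mean_unit_valued[OF that(2) this] emp_mean_unit_valued[OF that(2) S]
    show ?thesis by linarith
  qed
  have "expect D g - emp_mean m g S = expect (iid_sample D m) (\<lambda>S'. emp_mean m g S' - emp_mean m g S)"
    using expect_emp_mean[of g] finite_set_pmf_sample by simp
  also have "\<dots> \<le> expect (iid_sample D m) (ghost_gap m G S)"
  proof (rule integral_mono_AE)
    show "AE S' in measure_pmf (iid_sample D m). emp_mean m g S' - emp_mean m g S \<le> ghost_gap m G S S'"
      unfolding AE_measure_pmf_iff ghost_gap_def
    proof
      fix S' assume S': "S' \<in> set_pmf (iid_sample D m)"
      show "emp_mean m g S' - emp_mean m g S \<le> (SUP h\<in>G. emp_mean m h S' - emp_mean m h S)"
        by (rule cSUP_upper_abs_bounded[OF bound[OF S'] g])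
    qed
  qed (simp_all add: finite_set_pmf_sample)
  finally show "expect D g - emp_mean m g S \<le> expect (iid_sample D m) (ghost_gap m G S)" .
qed

lemma expect_ghost_gap_eq_signed_gap:
  assumes \<sigma>: "\<sigma> \<in> sign_vectors m"
  shows "expect (iid_sample (pair_pmf D D) m) (\<lambda>ps. ghost_gap m G (map fst ps) (map snd ps))
       = expect (iid_sample (pair_pmf D D) m) (signed_gap m G \<sigma>)"
proof -
  define P where "P = iid_sample (pair_pmf D D) m"
  have l\<sigma>: "length \<sigma> = m" using sign_vectors_length[OF \<sigma>] .
  have swapped: "ghost_gap m G (map fst (swap_by_signs \<sigma> ps)) (map snd (swap_by_signs \<sigma> ps))
      = signed_gap m G \<sigma> ps" if "length ps = m" for ps
  proof -
    have entry: "g (snd (swap_by_signs \<sigma> ps ! i)) - g (fst (swap_by_signs \<sigma> ps ! i))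
        = \<sigma> ! i * (g (snd (ps ! i)) - g (fst (ps ! i)))" if "i < m" for i g
      using sign_vectors_nth[OF \<sigma> that] nth_swap_by_signs[of \<sigma> ps i] that l\<sigma> \<open>length ps = m\<close>
      by auto
    have "emp_mean m g (map snd (swap_by_signs \<sigma> ps)) - emp_mean m g (map fst (swap_by_signs \<sigma> ps))
        = (\<Sum>i<m. \<sigma> ! i * (g (snd (ps ! i)) - g (fst (ps ! i)))) / real m" for g
      unfolding emp_mean_def diff_divide_distrib[symmetric] sum_subtractf[symmetric]
      using that l\<sigma> length_swap_by_signs[of \<sigma> ps] entry by simp
    then show ?thesis unfolding ghost_gap_def signed_gap_def by simp
  qed
  have "expect P (\<lambda>ps. ghost_gap m G (map fst ps) (map snd ps))
      = expect (map_pmf (swap_by_signs \<sigma>) P) (\<lambda>ps. ghost_gap m G (map fst ps) (map snd ps))"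
    using map_pmf_swap_by_signs_iid_sample[OF l\<sigma>, of D] by (simp add: P_def)
  also have "\<dots> = expect P (\<lambda>ps. ghost_gap m G (map fst (swap_by_signs \<sigma> ps)) (map snd (swap_by_signs \<sigma> ps)))"
    by simp
  also have "\<dots> = expect P (signed_gap m G \<sigma>)"
  proof (rule integral_cong_AE)
    show "AE ps in measure_pmf P.
        ghost_gap m G (map fst (swap_by_signs \<sigma> ps)) (map snd (swap_by_signs \<sigma> ps)) = signed_gap m G \<sigma> ps"
      unfolding AE_measure_pmf_iff P_def using set_pmf_iid_sample swapped by blast
  qed simp_all
  finally show ?thesis by (simp add: P_def)
qed

lemma signed_gap_le:
  assumes \<sigma>: "\<sigma> \<in> sign_vectors m" and ps: "ps \<in> set_pmf (iid_sample (pair_pmf D D) m)"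
  shows "signed_gap m G \<sigma> ps
    \<le> rademacher_corr m G \<sigma> (map snd ps) + rademacher_corr m G (map uminus \<sigma>) (map fst ps)"
  unfolding signed_gap_def
proof (rule cSUP_least[OF class_nonempty])
  fix g assume g: "g \<in> G"
  have lps: "length ps = m" and sps: "set ps \<subseteq> set_pmf D \<times> set_pmf D"
    using ps set_pmf_iid_sample[of "pair_pmf D D" m] by auto
  have "(\<Sum>i<m. \<sigma> ! i * (g (snd (ps ! i)) - g (fst (ps ! i)))) / real m
      = (\<Sum>i<m. \<sigma> ! i * g (map snd ps ! i)) / real m
        + (\<Sum>i<m. map uminus \<sigma> ! i * g (map fst ps ! i)) / real m"
    unfolding add_divide_distrib[symmetric] sum.distrib[symmetric]
    using lps sign_vectors_length[OF \<sigma>]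
    by (intro arg_cong2[where f="(/)"] sum.cong refl) (auto simp: algebra_simps)
  also have "\<dots> \<le> rademacher_corr m G \<sigma> (map snd ps) + rademacher_corr m G (map uminus \<sigma>) (map fst ps)"
    using sps lps
    by (intro add_mono signed_mean_le_rademacher_corr[OF _ g] map_uminus_sign_vectors[OF \<sigma>] \<sigma>) auto
  finally show "(\<Sum>i<m. \<sigma> ! i * (g (snd (ps ! i)) - g (fst (ps ! i)))) / real m
    \<le> rademacher_corr m G \<sigma> (map snd ps) + rademacher_corr m G (map uminus \<sigma>) (map fst ps)" .
qed

lemma avg_signed_gap_le:
  assumes ps: "ps \<in> set_pmf (iid_sample (pair_pmf D D) m)"
  shows "(\<Sum>\<sigma>\<in>sign_vectors m. signed_gap m G \<sigma> ps) / 2 ^ m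
    \<le> rademacher m G (map snd ps) + rademacher m G (map fst ps)"
proof -
  have "(\<Sum>\<sigma>\<in>sign_vectors m. signed_gap m G \<sigma> ps)
      \<le> (\<Sum>\<sigma>\<in>sign_vectors m. rademacher_corr m G \<sigma> (map snd ps)
                             + rademacher_corr m G (map uminus \<sigma>) (map fst ps))"
    using ps by (intro sum_mono signed_gap_le)
  also have "\<dots> = (\<Sum>\<sigma>\<in>sign_vectors m. rademacher_corr m G \<sigma> (map snd ps))
                 + (\<Sum>\<sigma>\<in>sign_vectors m. rademacher_corr m G \<sigma> (map fst ps))"
    by (simp add: sum.distrib sum_sign_vectors_uminus[of "\<lambda>\<sigma>. rademacher_corr m G \<sigma> (map fst ps)"])
  finally show ?thesis
    unfolding rademacher_def add_divide_distrib[symmetric] by (rule divide_right_mono) simp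
qed

text \<open>Symmetrization: replace the true mean by the mean over an independent ghost sample, then
  average over all ways of swapping sample and ghost points, which leaves the joint law invariant.\<close>

lemma symmetrization:
  "expect (iid_sample D m) (sup_deviation D m G) \<le> 2 * expect (iid_sample D m) (rademacher m G)"
proof -
  define M where "M = iid_sample D m"
  define P where "P = iid_sample (pair_pmf D D) m"
  have fM: "finite (set_pmf M)" using finite_set_pmf_sample M_def by simp
  have fP: "finite (set_pmf P)"
    using finite_set_pmf_iid_sample[of "pair_pmf D D"] finite_support by (simp add: P_def)
  have "expect M (sup_deviation D m G) \<le> expect M (\<lambda>S. expect M (ghost_gap m G S))"
    using fM sup_deviation_le_expect_ghost_gap
    by (intro integral_mono_AE) (auto simp: AE_measure_pmf_iff M_def)
  also have "\<dots> = expect P (\<lambda>ps. ghost_gap m G (map fst ps) (map snd ps))"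
    using expect_iid_sample_pair_pmf[OF finite_support, of m "ghost_gap m G"] by (simp add: M_def P_def)
  also have "\<dots> = (\<Sum>\<sigma>\<in>sign_vectors m. expect P (signed_gap m G \<sigma>)) / 2 ^ m"
  proof -
    have "(\<Sum>\<sigma>\<in>sign_vectors m. expect P (signed_gap m G \<sigma>))
        = (\<Sum>\<sigma>\<in>sign_vectors m. expect P (\<lambda>ps. ghost_gap m G (map fst ps) (map snd ps)))"
      using expect_ghost_gap_eq_signed_gap by (simp add: P_def)
    then show ?thesis by (simp add: sign_vectors_card)
  qed
  also have "\<dots> = expect P (\<lambda>ps. (\<Sum>\<sigma>\<in>sign_vectors m. signed_gap m G \<sigma> ps) / 2 ^ m)"
    using fP by simp
  also have "\<dots> \<le> expect P (\<lambda>ps. rademacher m G (map snd ps) + rademacher m G (map fst ps))"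
    using fP avg_signed_gap_le by (intro integral_mono_AE) (auto simp: AE_measure_pmf_iff P_def)
  also have "\<dots> = expect M (\<lambda>S. expect M (\<lambda>S'. rademacher m G S' + rademacher m G S))"
    using expect_iid_sample_pair_pmf[OF finite_support, of m "\<lambda>S S'. rademacher m G S' + rademacher m G S"]
    by (simp add: M_def P_def)
  also have "\<dots> = 2 * expect M (rademacher m G)"
    using fM by simp
  finally show ?thesis by (simp add: M_def)
qed

lemma mcdiarmid_confidence:
  assumes bd: "bounded_differences D m (1 / real m) f" and \<delta>: "0 < \<delta>" "\<delta> < 1"
  shows "measure_pmf.prob (iid_sample D m)
           {S. f S - expect (iid_sample D m) f \<ge> sqrt (ln (2 / \<delta>) / (2 * real m))} \<le> \<delta> / 2"
proof -
  define t where "t = sqrt (ln (2 / \<delta>) / (2 * real m))"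
  have "ln (2 / \<delta>) > 0" using \<delta> by (intro ln_gt_zero) (simp add: less_divide_eq)
  then have t: "t > 0" and t2: "t\<^sup>2 * (2 * real m) = ln (2 / \<delta>)"
    using sample_size_pos by (simp_all add: t_def)
  have "-2 * t\<^sup>2 / (real m * (1 / real m)\<^sup>2) = - ln (2 / \<delta>)"
    using sample_size_pos t2 by (simp add: field_simps power2_eq_square)
  then have "exp (-2 * t\<^sup>2 / (real m * (1 / real m)\<^sup>2)) = \<delta> / 2"
    using \<delta> by (simp add: exp_minus)
  then show ?thesis
    using mcdiarmid_inequality[OF finite_support sample_size_pos _ t bd] sample_size_pos
    by (simp add: t_def)
qed

theorem uniform_deviation_bound:
  assumes \<delta>: "0 < \<delta>" "\<delta> < 1"
  shows "measure_pmf.prob (iid_sample D m)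
     {S. \<forall>g\<in>G. expect D g \<le> emp_mean m g S + 2 * rademacher m G S + 3 * sqrt (ln (2 / \<delta>) / (2 * real m))}
       \<ge> 1 - \<delta>"
proof -
  define M where "M = iid_sample D m"
  define t where "t = sqrt (ln (2 / \<delta>) / (2 * real m))"
  define A1 where "A1 = {S. sup_deviation D m G S - expect M (sup_deviation D m G) \<ge> t}"
  define A2 where "A2 = {S. - rademacher m G S - expect M (\<lambda>S. - rademacher m G S) \<ge> t}"
  have A1: "measure_pmf.prob M A1 \<le> \<delta> / 2"
    using mcdiarmid_confidence[OF sup_deviation_bounded_differences \<delta>] by (simp add: A1_def M_def t_def)
  have A2: "measure_pmf.prob M A2 \<le> \<delta> / 2"
    using mcdiarmid_confidence[OF uminus_rademacher_bounded_differences \<delta>] by (simp add: A2_def M_def t_def)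
  have good: "expect D g \<le> emp_mean m g S + 2 * rademacher m G S + 3 * t"
    if S: "S \<in> set_pmf M" "S \<notin> A1 \<union> A2" and g: "g \<in> G" for S g
  proof -
    have "length S = m" "set S \<subseteq> set_pmf D" using S set_pmf_iid_sample M_def by blast+
    then have "\<bar>expect D h - emp_mean m h S\<bar> \<le> 1" if "h \<in> G" for h
      using expect_unit_valued[OF that] emp_mean_unit_valued[OF that] by fastforce
    then have "expect D g - emp_mean m g S \<le> sup_deviation D m G S"
      unfolding sup_deviation_def by (rule cSUP_upper_abs_bounded[OF _ g])
    then show ?thesis
      using S symmetrization finite_set_pmf_sample by (auto simp: A1_def A2_def M_def)
  qed
  have "1 - \<delta> \<le> 1 - measure_pmf.prob M (A1 \<union> A2)"
    using A1 A2 measure_subadditive[of A1 "measure_pmf M" A2] by simp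
  also have "\<dots> = measure_pmf.prob M (UNIV - (A1 \<union> A2))"
    using measure_pmf.prob_compl[of "A1 \<union> A2" M] by simp
  also have "\<dots> \<le> measure_pmf.prob M
      {S. \<forall>g\<in>G. expect D g \<le> emp_mean m g S + 2 * rademacher m G S + 3 * t}"
    using good by (intro measure_pmf_prob_mono_on_support) blast
  finally show ?thesis by (simp add: M_def t_def)
qed

end

lemma qdim_pos: "qdim n > 0" by (simp add: qdim_def)

lemma basis_proj_carrier[simp]: "basis_proj n x \<in> carrier_mat (qdim n) (qdim n)"
  by (simp add: basis_proj_def)

lemma dim_basis_proj[simp]: "dim_row (basis_proj n x) = qdim n" "dim_col (basis_proj n x) = qdim n"
  by (simp_all add: basis_proj_def)

lemma row_basis_proj: "i < qdim n \<Longrightarrow> x < qdim n \<Longrightarrow>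
   row (basis_proj n x) i = (if i = x then unit_vec (qdim n) x else 0\<^sub>v (qdim n))"
  by (rule eq_vecI) (auto simp: basis_proj_def unit_vec_def)

lemma col_basis_proj: "i < qdim n \<Longrightarrow> x < qdim n \<Longrightarrow>
   col (basis_proj n x) i = (if i = x then unit_vec (qdim n) x else 0\<^sub>v (qdim n))"
  by (rule eq_vecI) (auto simp: basis_proj_def unit_vec_def)

lemma mtrace_mult_basis_proj:
  assumes A: "A \<in> carrier_mat (qdim n) (qdim n)" and y: "y < qdim n"
  shows "mtrace (A * basis_proj n y) = A $$ (y, y)"
proof -
  have "mtrace (A * basis_proj n y) = (\<Sum>i<qdim n. (A * basis_proj n y) $$ (i, i))"
    using A by (simp add: mtrace_def)
  also have "\<dots> = (\<Sum>i<qdim n. if i = y then A $$ (y, y) else 0)"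
  proof (intro sum.cong refl)
    fix i assume i: "i \<in> {..<qdim n}"
    have "(A * basis_proj n y) $$ (i, i) = row A i \<bullet> col (basis_proj n y) i"
      using A i by (simp add: basis_proj_def)
    also have "\<dots> = (if i = y then A $$ (y, y) else 0)"
      using A i y by (auto simp: col_basis_proj)
    finally show "(A * basis_proj n y) $$ (i, i) = (if i = y then A $$ (y, y) else 0)" .
  qed
  also have "\<dots> = A $$ (y, y)" using y by simp
  finally show ?thesis .
qed

lemma mtrace_basis_proj: "x < qdim n \<Longrightarrow> mtrace (basis_proj n x) = 1"
  by (simp add: mtrace_def basis_proj_def)

lemma conjugate_unit_vec: "y < d \<Longrightarrow> conjugate (unit_vec d y :: complex vec) = unit_vec d y"
  by (rule eq_vecI) (auto simp: unit_vec_def)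

lemma psd_diag_nonneg:
  assumes p: "psd d A" and y: "y < d"
  shows "0 \<le> Re (A $$ (y, y))"
proof -
  have A: "A \<in> carrier_mat d d" using p by (simp add: psd_def)
  have v: "unit_vec d y \<in> carrier_vec d" by simp
  have "Matrix.scalar_prod (conjugate (unit_vec d y)) (mult_mat_vec A (unit_vec d y)) = A $$ (y, y)"
  proof -
    have "Matrix.scalar_prod (conjugate (unit_vec d y)) (mult_mat_vec A (unit_vec d y))
        = (mult_mat_vec A (unit_vec d y)) $ y"
      using A y by (simp add: conjugate_unit_vec)
    also have "\<dots> = row A y \<bullet> unit_vec d y" using A y by simp
    also have "\<dots> = A $$ (y, y)" using A y by simp
    finally show ?thesis .
  qed
  then show ?thesis using p v unfolding psd_def by metis
qed

lemma psd_basis_proj: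
  assumes x: "x < qdim n"
  shows "psd (qdim n) (basis_proj n x)"
  unfolding psd_def
proof (intro conjI ballI)
  show "basis_proj n x \<in> carrier_mat (qdim n) (qdim n)" by simp
  fix v :: "complex vec" assume v: "v \<in> carrier_vec (qdim n)"
  have mv: "mult_mat_vec (basis_proj n x) v = (v $ x) \<cdot>\<^sub>v unit_vec (qdim n) x"
  proof (rule eq_vecI)
    fix i assume "i < dim_vec ((v $ x) \<cdot>\<^sub>v unit_vec (qdim n) x)"
    then have i: "i < qdim n" by simp
    show "mult_mat_vec (basis_proj n x) v $ i = ((v $ x) \<cdot>\<^sub>v unit_vec (qdim n) x) $ i"
      using i x v by (simp add: row_basis_proj)
  qed simp
  have "Matrix.scalar_prod (conjugate v) (mult_mat_vec (basis_proj n x) v) = v $ x * cnj (v $ x)"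
    unfolding mv using v x by (simp add: scalar_prod_smult_right)
  also have "\<dots> = complex_of_real ((cmod (v $ x))^2)" by (simp add: complex_mult_cnj cmod_def)
  finally have e: "Matrix.scalar_prod (conjugate v) (mult_mat_vec (basis_proj n x) v) = complex_of_real ((cmod (v $ x))^2)" .
  show "Im (Matrix.scalar_prod (conjugate v) (mult_mat_vec (basis_proj n x) v)) = 0" unfolding e by simp
  show "0 \<le> Re (Matrix.scalar_prod (conjugate v) (mult_mat_vec (basis_proj n x) v))" unfolding e by simp
qed

lemma block_0_0: "X \<in> carrier_mat d d \<Longrightarrow> block d X 0 0 = X"
  by (rule eq_matI) (auto simp: block_def)

lemma channel_carrier: "channel n \<Phi> \<Longrightarrow> X \<in> carrier_mat (qdim n) (qdim n) \<Longrightarrow> \<Phi> X \<in> carrier_mat (qdim n) (qdim n)"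
  by (simp add: channel_def)

lemma channel_psd:
  assumes c: "channel n \<Phi>" and p: "psd (qdim n) X"
  shows "psd (qdim n) (\<Phi> X)"
proof -
  have X: "X \<in> carrier_mat (qdim n) (qdim n)" using p by (simp add: psd_def)
  have cp: "completely_positive (qdim n) \<Phi>" using c by (simp add: channel_def)
  have "\<forall>X. psd (1 * qdim n) X \<longrightarrow> psd (1 * qdim n) (id_tensor 1 (qdim n) \<Phi> X)"
    using cp unfolding completely_positive_def by blast
  then have "psd (1 * qdim n) (id_tensor 1 (qdim n) \<Phi> X)" using p by simp
  moreover have "id_tensor 1 (qdim n) \<Phi> X = \<Phi> X"
  proof (rule eq_matI)
    show "dim_row (id_tensor 1 (qdim n) \<Phi> X) = dim_row (\<Phi> X)" using channel_carrier[OF c X] by (simp add: id_tensor_def)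
    show "dim_col (id_tensor 1 (qdim n) \<Phi> X) = dim_col (\<Phi> X)" using channel_carrier[OF c X] by (simp add: id_tensor_def)
    fix i j assume "i < dim_row (\<Phi> X)" "j < dim_col (\<Phi> X)"
    then have ij: "i < qdim n" "j < qdim n" using channel_carrier[OF c X] by auto
    then show "id_tensor 1 (qdim n) \<Phi> X $$ (i, j) = \<Phi> X $$ (i, j)"
      by (simp add: id_tensor_def block_0_0[OF X])
  qed
  ultimately show ?thesis by simp
qed

lemma f_chan_eq_diag:
  assumes c: "channel n \<Phi>" and x: "x < qdim n" and y: "y < qdim n"
  shows "f_chan n \<Phi> (x, y) = Re (\<Phi> (basis_proj n x) $$ (y, y))"
  unfolding f_chan_def using mtrace_mult_basis_proj[OF channel_carrier[OF c basis_proj_carrier] y] by simp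

lemma f_chan_unit_valued:
  assumes c: "channel n \<Phi>" and x: "x < qdim n" and y: "y < qdim n"
  shows "0 \<le> f_chan n \<Phi> (x, y) \<and> f_chan n \<Phi> (x, y) \<le> 1"
proof -
  define A where "A = \<Phi> (basis_proj n x)"
  have Ac: "A \<in> carrier_mat (qdim n) (qdim n)" unfolding A_def by (rule channel_carrier[OF c basis_proj_carrier])
  have Ap: "psd (qdim n) A" unfolding A_def by (rule channel_psd[OF c psd_basis_proj[OF x]])
  have nn: "0 \<le> Re (A $$ (i, i))" if "i < qdim n" for i by (rule psd_diag_nonneg[OF Ap that])
  have "mtrace A = mtrace (basis_proj n x)"
    using c unfolding A_def channel_def trace_preserving_def by simp
  then have tr: "(\<Sum>i<qdim n. Re (A $$ (i, i))) = 1"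
    using Ac mtrace_basis_proj[OF x] by (simp add: mtrace_def flip: Re_sum)
  have "Re (A $$ (y, y)) \<le> (\<Sum>i<qdim n. Re (A $$ (i, i)))"
    by (rule member_le_sum[where f="\<lambda>i. Re (A $$ (i, i))"]) (use y nn in auto)
  then show ?thesis using f_chan_eq_diag[OF c x y] nn[OF y] tr by (simp add: A_def)
qed

lemma block_index_less: "a < (m::nat) \<Longrightarrow> r < d \<Longrightarrow> a * d + r < m * d"
proof -
  assume "a < m" "r < d"
  then have "a * d + r < a * d + d" by simp
  also have "\<dots> = Suc a * d" by simp
  also have "\<dots> \<le> m * d" using \<open>a < m\<close> by (intro mult_right_mono) auto
  finally show ?thesis .
qed

lemma block_carrier[simp]: "block d X a b \<in> carrier_mat d d"
  by (simp add: block_def)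

lemma dim_block[simp]: "dim_row (block d X a b) = d" "dim_col (block d X a b) = d"
  by (simp_all add: block_def)

lemma id_tensor_comp:
  assumes c2: "\<And>X. X \<in> carrier_mat d d \<Longrightarrow> \<Phi>2 X \<in> carrier_mat d d" and d: "d > 0"
  shows "id_tensor m d (\<Phi>1 \<circ> \<Phi>2) X = id_tensor m d \<Phi>1 (id_tensor m d \<Phi>2 X)"
proof (rule eq_matI)
  show "dim_row (id_tensor m d (\<Phi>1 \<circ> \<Phi>2) X) = dim_row (id_tensor m d \<Phi>1 (id_tensor m d \<Phi>2 X))"
    by (simp add: id_tensor_def)
  show "dim_col (id_tensor m d (\<Phi>1 \<circ> \<Phi>2) X) = dim_col (id_tensor m d \<Phi>1 (id_tensor m d \<Phi>2 X))"
    by (simp add: id_tensor_def)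
  fix i j assume "i < dim_row (id_tensor m d \<Phi>1 (id_tensor m d \<Phi>2 X))" "j < dim_col (id_tensor m d \<Phi>1 (id_tensor m d \<Phi>2 X))"
  then have ij: "i < m * d" "j < m * d" by (auto simp: id_tensor_def)
  define a where "a = i div d"
  define b where "b = j div d"
  have ab: "a < m" "b < m" using ij d unfolding a_def b_def by (auto simp: less_mult_imp_div_less)
  have cb: "\<Phi>2 (block d X a b) \<in> carrier_mat d d" by (rule c2) simp
  have blk: "block d (id_tensor m d \<Phi>2 X) a b = \<Phi>2 (block d X a b)"
  proof (rule eq_matI)
    show "dim_row (block d (id_tensor m d \<Phi>2 X) a b) = dim_row (\<Phi>2 (block d X a b))"
      using carrier_matD[OF cb] by simp
    show "dim_col (block d (id_tensor m d \<Phi>2 X) a b) = dim_col (\<Phi>2 (block d X a b))"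
      using carrier_matD[OF cb] by simp
    fix r s assume "r < dim_row (\<Phi>2 (block d X a b))" "s < dim_col (\<Phi>2 (block d X a b))"
    then have rs: "r < d" "s < d" using carrier_matD[OF cb] by auto
    show "block d (id_tensor m d \<Phi>2 X) a b $$ (r, s) = \<Phi>2 (block d X a b) $$ (r, s)"
      using rs block_index_less[OF ab(1) rs(1)] block_index_less[OF ab(2) rs(2)]
      by (simp add: block_def id_tensor_def)
  qed
  show "id_tensor m d (\<Phi>1 \<circ> \<Phi>2) X $$ (i, j) = id_tensor m d \<Phi>1 (id_tensor m d \<Phi>2 X) $$ (i, j)"
    using ij blk by (simp add: id_tensor_def a_def b_def)
qed

lemma uminus_smult_add_self: "A \<in> carrier_mat d d \<Longrightarrow> (-1 :: complex) \<cdot>\<^sub>m A + A = 0\<^sub>m d d"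
  by (rule eq_matI) auto

lemma channel_zero:
  assumes c: "channel n G"
  shows "G (0\<^sub>m (qdim n) (qdim n)) = 0\<^sub>m (qdim n) (qdim n)"
proof -
  let ?Z = "0\<^sub>m (qdim n) (qdim n) :: complex mat"
  have lin: "linear_map_on (qdim n) G" using c by (simp add: channel_def)
  have Z: "?Z \<in> carrier_mat (qdim n) (qdim n)" by simp
  have "G ((-1) \<cdot>\<^sub>m ?Z + ?Z) = (-1) \<cdot>\<^sub>m G ?Z + G ?Z" using lin Z unfolding linear_map_on_def by blast
  moreover have "(-1 :: complex) \<cdot>\<^sub>m ?Z + ?Z = ?Z" by (rule uminus_smult_add_self[OF Z])
  moreover have "(-1 :: complex) \<cdot>\<^sub>m G ?Z + G ?Z = ?Z" by (rule uminus_smult_add_self[OF channel_carrier[OF c Z]])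
  ultimately show ?thesis by simp
qed

lemma channel_comp:
  assumes c1: "channel n \<Phi>1" and c2: "channel n \<Phi>2"
  shows "channel n (\<Phi>1 \<circ> \<Phi>2)"
proof -
  let ?d = "qdim n"
  have car: "\<And>X. X \<in> carrier_mat ?d ?d \<Longrightarrow> (\<Phi>1 \<circ> \<Phi>2) X \<in> carrier_mat ?d ?d"
    using channel_carrier[OF c1] channel_carrier[OF c2] by simp
  have zer: "\<And>X. X \<notin> carrier_mat ?d ?d \<Longrightarrow> (\<Phi>1 \<circ> \<Phi>2) X = 0\<^sub>m ?d ?d"
    using c2 channel_zero[OF c1] unfolding channel_def by simp
  have lin: "linear_map_on ?d (\<Phi>1 \<circ> \<Phi>2)"
    unfolding linear_map_on_def
  proof (intro ballI allI)
    fix X Y :: "complex mat" and c :: complex assume X: "X \<in> carrier_mat ?d ?d" and Y: "Y \<in> carrier_mat ?d ?d"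
    have "\<Phi>2 (c \<cdot>\<^sub>m X + Y) = c \<cdot>\<^sub>m \<Phi>2 X + \<Phi>2 Y" using c2 X Y unfolding channel_def linear_map_on_def by blast
    moreover have "\<Phi>1 (c \<cdot>\<^sub>m \<Phi>2 X + \<Phi>2 Y) = c \<cdot>\<^sub>m \<Phi>1 (\<Phi>2 X) + \<Phi>1 (\<Phi>2 Y)"
      using c1 channel_carrier[OF c2 X] channel_carrier[OF c2 Y] unfolding channel_def linear_map_on_def by blast
    ultimately show "(\<Phi>1 \<circ> \<Phi>2) (c \<cdot>\<^sub>m X + Y) = c \<cdot>\<^sub>m (\<Phi>1 \<circ> \<Phi>2) X + (\<Phi>1 \<circ> \<Phi>2) Y" by simp
  qed
  have cp: "completely_positive ?d (\<Phi>1 \<circ> \<Phi>2)"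
    unfolding completely_positive_def
  proof (intro allI impI)
    fix m X assume m: "1 \<le> m" and p: "psd (m * ?d) X"
    have p2: "psd (m * ?d) (id_tensor m ?d \<Phi>2 X)" using c2 m p unfolding channel_def completely_positive_def by blast
    have p1: "psd (m * ?d) (id_tensor m ?d \<Phi>1 (id_tensor m ?d \<Phi>2 X))" using c1 m p2 unfolding channel_def completely_positive_def by blast
    show "psd (m * ?d) (id_tensor m ?d (\<Phi>1 \<circ> \<Phi>2) X)"
      using p1 id_tensor_comp[of ?d \<Phi>2 m \<Phi>1 X] channel_carrier[OF c2] qdim_pos by simp
  qed
  have tp: "trace_preserving ?d (\<Phi>1 \<circ> \<Phi>2)"
    using c1 c2 channel_carrier[OF c2] unfolding channel_def trace_preserving_def by simp
  show ?thesis unfolding channel_def using car zer lin cp tp by blast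
qed

lemma channel_foldr_comp:
  "Ls \<noteq> [] \<Longrightarrow> (\<forall>G\<in>set Ls. channel n G) \<Longrightarrow> channel n (foldr (\<circ>) Ls id)"
proof (induction Ls)
  case Nil then show ?case by simp
next
  case (Cons G Ls)
  show ?case
  proof (cases "Ls = []")
    case True then show ?thesis using Cons.prems by simp
  next
    case False
    have ih: "channel n (foldr (\<circ>) Ls id)" by (rule Cons.IH[OF False]) (use Cons.prems in simp)
    have ch: "channel n (G \<circ> foldr (\<circ>) Ls id)" by (rule channel_comp[OF _ ih]) (use Cons.prems in simp)
    have eq: "foldr (\<circ>) (G # Ls) id = G \<circ> foldr (\<circ>) Ls id" by (simp add: fun_eq_iff)
    show ?thesis unfolding eq by (rule ch)
  qed
qed

lemma channel_comps_k:
  assumes "\<forall>G\<in>Ofr. channel n G" "channel n \<Psi>" "\<Phi> \<in> comps_k Ofr \<Psi> k"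
  shows "channel n \<Phi>"
  using assms channel_foldr_comp unfolding comps_k_def by blast

subsection \<open>Quasi-probability decompositions\<close>

type_synonym superop = "complex mat \<Rightarrow> complex mat"

definition lin_comb :: "(real \<times> superop) list \<Rightarrow> complex mat \<Rightarrow> nat \<times> nat \<Rightarrow> complex" where
  "lin_comb L X rs = sum_list (map (\<lambda>p. complex_of_real (fst p) * (snd p X $$ rs)) L)"

definition quasi_decomp :: "nat \<Rightarrow> superop set \<Rightarrow> real \<Rightarrow> superop \<Rightarrow> bool" where
  "quasi_decomp n Ofr c \<Phi> \<longleftrightarrow> (\<exists>L. set (map snd L) \<subseteq> Ofr \<and> sum_list (map fst L) = 1 \<and>
     sum_list (map (\<lambda>p. \<bar>fst p\<bar>) L) \<le> c \<and>
     (\<forall>X\<in>carrier_mat (qdim n) (qdim n). \<Phi> X \<in> carrier_mat (qdim n) (qdim n) \<and>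
        (\<forall>r<qdim n. \<forall>s<qdim n. \<Phi> X $$ (r, s) = lin_comb L X (r, s))))"

definition comp_lin_comb :: "(real \<times> superop) list \<Rightarrow> (real \<times> superop) list \<Rightarrow> (real \<times> superop) list" where
  "comp_lin_comb L1 L2 = concat (map (\<lambda>q. map (\<lambda>p. (fst q * fst p, snd q \<circ> snd p)) L2) L1)"

lemma lin_comb_Nil [simp]: "lin_comb [] X rs = 0"
  by (simp add: lin_comb_def)

lemma lin_comb_Cons [simp]: "lin_comb (p # L) X rs = complex_of_real (fst p) * (snd p X $$ rs) + lin_comb L X rs"
  by (simp add: lin_comb_def)

lemma lin_comb_append [simp]: "lin_comb (L1 @ L2) X rs = lin_comb L1 X rs + lin_comb L2 X rs"
  by (simp add: lin_comb_def)

lemma lin_comb_scale: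
  "lin_comb (map (\<lambda>p. (a * fst p, g p)) L) X rs = complex_of_real a * lin_comb (map (\<lambda>p. (fst p, g p)) L) X rs"
  by (induction L) (simp_all add: distrib_left mult_ac)

lemma Re_lin_comb: "Re (lin_comb L X rs) = sum_list (map (\<lambda>p. fst p * Re (snd p X $$ rs)) L)"
  by (induction L) auto

lemma sum_list_abs_fst_nonneg: "0 \<le> sum_list (map (\<lambda>p. \<bar>fst p\<bar>) (L :: (real \<times> 'b) list))"
  by (induction L) auto

lemma sum_list_abs_fst_scale:
  "sum_list (map (\<lambda>p. \<bar>fst p\<bar>) (map (\<lambda>p. (a * fst p, snd p)) (L :: (real \<times> 'b) list)))
   = \<bar>a\<bar> * sum_list (map (\<lambda>p. \<bar>fst p\<bar>) L)"
  by (induction L) (simp_all add: abs_mult distrib_left)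

lemma sum_list_fst_scale:
  "sum_list (map fst (map (\<lambda>p. (a * fst p, snd p)) (L :: (real \<times> 'b) list))) = a * sum_list (map fst L)"
  by (induction L) (simp_all add: distrib_left)

lemma sum_list_abs_fst_eq:
  "\<forall>p\<in>set L. fst p \<ge> 0 \<Longrightarrow> sum_list (map (\<lambda>p. \<bar>fst p\<bar>) (L :: (real \<times> 'b) list)) = sum_list (map fst L)"
  by (induction L) auto

lemma lin_comb_comp_lin_comb:
  "lin_comb (comp_lin_comb L1 L2) X rs
   = sum_list (map (\<lambda>q. complex_of_real (fst q) * lin_comb (map (\<lambda>p. (fst p, snd q \<circ> snd p)) L2) X rs) L1)"
  unfolding comp_lin_comb_def by (induction L1) (simp_all add: lin_comb_scale)

lemma sum_list_fst_comp_lin_comb: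
  "sum_list (map fst (comp_lin_comb L1 L2)) = sum_list (map fst L1) * sum_list (map fst L2)"
  unfolding comp_lin_comb_def by (induction L1) (simp_all add: sum_list_const_mult o_def distrib_right)

lemma sum_list_abs_fst_comp_lin_comb:
  "sum_list (map (\<lambda>p. \<bar>fst p\<bar>) (comp_lin_comb L1 L2))
   = sum_list (map (\<lambda>p. \<bar>fst p\<bar>) L1) * sum_list (map (\<lambda>p. \<bar>fst p\<bar>) L2)"
  unfolding comp_lin_comb_def by (induction L1) (simp_all add: sum_list_const_mult o_def distrib_right abs_mult)

lemma channel_lin_comb:
  assumes c: "channel n G"
  shows "(\<forall>p\<in>set L. snd p X \<in> carrier_mat (qdim n) (qdim n)) \<Longrightarrow> M \<in> carrier_mat (qdim n) (qdim n) \<Longrightarrow>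
    (\<forall>r<qdim n. \<forall>s<qdim n. M $$ (r, s) = lin_comb L X (r, s)) \<Longrightarrow> r < qdim n \<Longrightarrow> s < qdim n \<Longrightarrow>
    G M $$ (r, s) = lin_comb (map (\<lambda>p. (fst p, G \<circ> snd p)) L) X (r, s)"
proof (induction L arbitrary: M)
  case Nil
  have "M = 0\<^sub>m (qdim n) (qdim n)" by (rule eq_matI) (use Nil in auto)
  then show ?case using channel_zero[OF c] Nil by simp
next
  case (Cons p L)
  let ?d = "qdim n"
  define M' where "M' = mat ?d ?d (\<lambda>rs. lin_comb L X rs)"
  have M'c: "M' \<in> carrier_mat ?d ?d" by (simp add: M'_def)
  have pX: "snd p X \<in> carrier_mat ?d ?d" using Cons.prems by simp
  have M: "M = complex_of_real (fst p) \<cdot>\<^sub>m snd p X + M'"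
    by (rule eq_matI) (use Cons.prems pX in \<open>auto simp: M'_def\<close>)
  have "G M = complex_of_real (fst p) \<cdot>\<^sub>m G (snd p X) + G M'"
    using c pX M'c unfolding M channel_def linear_map_on_def by blast
  then have "G M $$ (r, s) = complex_of_real (fst p) * G (snd p X) $$ (r, s) + G M' $$ (r, s)"
    using channel_carrier[OF c pX] channel_carrier[OF c M'c] Cons.prems by simp
  also have "G M' $$ (r, s) = lin_comb (map (\<lambda>p. (fst p, G \<circ> snd p)) L) X (r, s)"
    by (rule Cons.IH) (use Cons.prems M'c in \<open>auto simp: M'_def\<close>)
  finally show ?case by (simp add: o_def)
qed

lemma quasi_decomp_mono: "quasi_decomp n Ofr c \<Phi> \<Longrightarrow> c \<le> c' \<Longrightarrow> quasi_decomp n Ofr c' \<Phi>"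
  unfolding quasi_decomp_def by (meson order_trans)

lemma quasi_decomp_free: "G \<in> Ofr \<Longrightarrow> channel n G \<Longrightarrow> quasi_decomp n Ofr 1 G"
  unfolding quasi_decomp_def by (rule exI[of _ "[(1, G)]"]) (auto simp: channel_carrier)

lemma lin_comb_comp:
  assumes ch: "\<forall>G\<in>Ofr. channel n G" and L1: "set (map snd L1) \<subseteq> Ofr" and L2: "set (map snd L2) \<subseteq> Ofr"
    and X: "X \<in> carrier_mat (qdim n) (qdim n)" and Y: "Y \<in> carrier_mat (qdim n) (qdim n)"
    and Y_eq: "\<forall>r<qdim n. \<forall>s<qdim n. Y $$ (r, s) = lin_comb L2 X (r, s)"
    and r: "r < qdim n" and s: "s < qdim n"
  shows "lin_comb L1 Y (r, s) = lin_comb (comp_lin_comb L1 L2) X (r, s)"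
proof -
  have "snd q Y $$ (r, s) = lin_comb (map (\<lambda>p. (fst p, snd q \<circ> snd p)) L2) X (r, s)"
    if "q \<in> set L1" for q
  proof (rule channel_lin_comb[OF _ _ Y Y_eq r s])
    show "channel n (snd q)" using that L1 ch by auto
    show "\<forall>p\<in>set L2. snd p X \<in> carrier_mat (qdim n) (qdim n)"
      using L2 ch channel_carrier[OF _ X] by auto
  qed
  then show ?thesis
    unfolding lin_comb_comp_lin_comb by (simp add: lin_comb_def cong: map_cong)
qed

lemma quasi_decomp_comp:
  assumes ch: "\<forall>G\<in>Ofr. channel n G" and cl: "closed_under_comp Ofr"
    and r1: "quasi_decomp n Ofr c1 \<Phi>1" and r2: "quasi_decomp n Ofr c2 \<Phi>2"
  shows "quasi_decomp n Ofr (c1 * c2) (\<Phi>1 \<circ> \<Phi>2)"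
proof -
  let ?d = "qdim n"
  obtain L1 where L1: "set (map snd L1) \<subseteq> Ofr" "sum_list (map fst L1) = 1" "sum_list (map (\<lambda>p. \<bar>fst p\<bar>) L1) \<le> c1"
    "\<forall>X\<in>carrier_mat ?d ?d. \<Phi>1 X \<in> carrier_mat ?d ?d \<and> (\<forall>r<?d. \<forall>s<?d. \<Phi>1 X $$ (r, s) = lin_comb L1 X (r, s))"
    using r1 unfolding quasi_decomp_def by blast
  obtain L2 where L2: "set (map snd L2) \<subseteq> Ofr" "sum_list (map fst L2) = 1" "sum_list (map (\<lambda>p. \<bar>fst p\<bar>) L2) \<le> c2"
    "\<forall>X\<in>carrier_mat ?d ?d. \<Phi>2 X \<in> carrier_mat ?d ?d \<and> (\<forall>r<?d. \<forall>s<?d. \<Phi>2 X $$ (r, s) = lin_comb L2 X (r, s))"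
    using r2 unfolding quasi_decomp_def by blast
  show ?thesis unfolding quasi_decomp_def
  proof (intro exI[of _ "comp_lin_comb L1 L2"] conjI ballI allI impI)
    show "set (map snd (comp_lin_comb L1 L2)) \<subseteq> Ofr"
    proof
      fix G assume "G \<in> set (map snd (comp_lin_comb L1 L2))"
      then obtain q p where "q \<in> set L1" "p \<in> set L2" "G = snd q \<circ> snd p"
        by (auto simp: comp_lin_comb_def)
      then show "G \<in> Ofr" using L1(1) L2(1) cl unfolding closed_under_comp_def by auto
    qed
    show "sum_list (map fst (comp_lin_comb L1 L2)) = 1"
      using L1(2) L2(2) by (simp add: sum_list_fst_comp_lin_comb)
    show "sum_list (map (\<lambda>p. \<bar>fst p\<bar>) (comp_lin_comb L1 L2)) \<le> c1 * c2"
      unfolding sum_list_abs_fst_comp_lin_comb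
      using L1(3) L2(3) sum_list_abs_fst_nonneg[of L1] sum_list_abs_fst_nonneg[of L2]
      by (intro mult_mono) auto
    fix X :: "complex mat" assume X: "X \<in> carrier_mat ?d ?d"
    then have X2: "\<Phi>2 X \<in> carrier_mat ?d ?d" using L2(4) by blast
    then show "(\<Phi>1 \<circ> \<Phi>2) X \<in> carrier_mat ?d ?d" using L1(4) by auto
    fix r s assume r: "r < ?d" and s: "s < ?d"
    have "(\<Phi>1 \<circ> \<Phi>2) X $$ (r, s) = lin_comb L1 (\<Phi>2 X) (r, s)" using L1(4) X2 r s by simp
    also have "\<dots> = lin_comb (comp_lin_comb L1 L2) X (r, s)"
      using L2(4) X by (intro lin_comb_comp[OF ch L1(1) L2(1) X X2 _ r s]) blast
    finally show "(\<Phi>1 \<circ> \<Phi>2) X $$ (r, s) = lin_comb (comp_lin_comb L1 L2) X (r, s)" .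
  qed
qed

lemma in_conv_lin_comb:
  assumes "in_conv n Ofr F"
  shows "\<exists>L. set (map snd L) \<subseteq> Ofr \<and> (\<forall>p\<in>set L. fst p \<ge> 0) \<and> sum_list (map fst L) = 1 \<and>
     (\<forall>X\<in>carrier_mat (qdim n) (qdim n). \<forall>r<qdim n. \<forall>s<qdim n. F X $$ (r, s) = lin_comb L X (r, s))"
proof -
  obtain N :: nat and w :: "nat \<Rightarrow> real" and G :: "nat \<Rightarrow> superop" where h: "\<forall>i<N. G i \<in> Ofr \<and> w i \<ge> 0" "(\<Sum>i<N. w i) = 1"
    "\<forall>X \<in> carrier_mat (qdim n) (qdim n).
       F X = mat (qdim n) (qdim n) (\<lambda>(r, c). \<Sum>i<N. complex_of_real (w i) * (G i X $$ (r, c)))"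
    using assms[unfolded in_conv_def] by blast
  define L where "L = map (\<lambda>i. (w i, G i)) [0..<N]"
  show ?thesis
  proof (intro exI[of _ L] conjI ballI allI impI)
    show "set (map snd L) \<subseteq> Ofr" "\<And>p. p \<in> set L \<Longrightarrow> fst p \<ge> 0" using h(1) by (auto simp: L_def)
    show "sum_list (map fst L) = 1" using h(2)
      by (simp add: L_def o_def interv_sum_list_conv_sum_set_nat atLeast0LessThan)
    fix X :: "complex mat" and r s
    assume "X \<in> carrier_mat (qdim n) (qdim n)" "r < qdim n" "s < qdim n"
    then show "F X $$ (r, s) = lin_comb L X (r, s)"
      using h(3) by (simp add: L_def lin_comb_def o_def interv_sum_list_conv_sum_set_nat atLeast0LessThan)
  qed
qed

text \<open>If \<open>(\<Phi> + l \<Phi>') / (1 + l)\<close> and \<open>\<Phi>'\<close> are convex combinations of free channels, then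
  \<open>\<Phi> = (1 + l) (\<Phi> + l \<Phi>') / (1 + l) - l \<Phi>'\<close> has negativity \<open>(1 + l) + l\<close>.\<close>

lemma quasi_decomp_of_mix:
  assumes car: "\<forall>X\<in>carrier_mat (qdim n) (qdim n). \<Phi> X \<in> carrier_mat (qdim n) (qdim n)"
    and l: "l \<ge> 0" and conv: "in_conv n Ofr \<Phi>'" and conv_mix: "in_conv n Ofr (mix n \<Phi> l \<Phi>')"
  shows "quasi_decomp n Ofr (1 + 2 * l) \<Phi>"
proof -
  let ?d = "qdim n"
  obtain LA where LA: "set (map snd LA) \<subseteq> Ofr" "\<forall>p\<in>set LA. fst p \<ge> 0" "sum_list (map fst LA) = 1"
    "\<forall>X\<in>carrier_mat ?d ?d. \<forall>r<?d. \<forall>s<?d. mix n \<Phi> l \<Phi>' X $$ (r, s) = lin_comb LA X (r, s)"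
    using in_conv_lin_comb[OF conv_mix] by blast
  obtain LB where LB: "set (map snd LB) \<subseteq> Ofr" "\<forall>p\<in>set LB. fst p \<ge> 0" "sum_list (map fst LB) = 1"
    "\<forall>X\<in>carrier_mat ?d ?d. \<forall>r<?d. \<forall>s<?d. \<Phi>' X $$ (r, s) = lin_comb LB X (r, s)"
    using in_conv_lin_comb[OF conv] by blast
  define L where "L = map (\<lambda>p. ((1 + l) * fst p, snd p)) LA @ map (\<lambda>p. (- l * fst p, snd p)) LB"
  show ?thesis unfolding quasi_decomp_def
  proof (intro exI[of _ L] conjI ballI allI impI)
    show "set (map snd L) \<subseteq> Ofr" using LA(1) LB(1) by (auto simp: L_def)
    show "sum_list (map fst L) = 1"
      by (simp only: L_def map_append sum_list_append sum_list_fst_scale LA(3) LB(3)) simp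
    show "sum_list (map (\<lambda>p. \<bar>fst p\<bar>) L) \<le> 1 + 2 * l"
      by (simp only: L_def map_append sum_list_append sum_list_abs_fst_scale sum_list_abs_fst_eq[OF LA(2)]
          sum_list_abs_fst_eq[OF LB(2)] LA(3) LB(3)) (use l in simp)
    fix X :: "complex mat" assume X: "X \<in> carrier_mat ?d ?d"
    then show "\<Phi> X \<in> carrier_mat ?d ?d" using car by blast
    fix r s assume r: "r < ?d" and s: "s < ?d"
    have "mix n \<Phi> l \<Phi>' X $$ (r, s)
        = (\<Phi> X $$ (r, s) + complex_of_real l * \<Phi>' X $$ (r, s)) / complex_of_real (1 + l)"
      using r s by (simp add: mix_def)
    then have "\<Phi> X $$ (r, s) = complex_of_real (1 + l) * lin_comb LA X (r, s) - complex_of_real l * lin_comb LB X (r, s)"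
      using LA(4) LB(4) X r s l by (simp add: field_simps del: of_real_add)
    also have "\<dots> = lin_comb L X (r, s)"
      unfolding L_def lin_comb_append lin_comb_scale[of "1 + l" snd] lin_comb_scale[of "- l" snd] by simp
    finally show "\<Phi> X $$ (r, s) = lin_comb L X (r, s)" .
  qed
qed

lemma quasi_decomp_foldr_comp:
  assumes ch: "\<forall>G\<in>Ofr. channel n G" and cl: "closed_under_comp Ofr"
    and \<Psi>: "quasi_decomp n Ofr c \<Psi>"
  shows "Ls \<noteq> [] \<Longrightarrow> set Ls \<subseteq> Ofr \<union> {\<Psi>} \<Longrightarrow>
    quasi_decomp n Ofr (c ^ length (filter (\<lambda>G. G = \<Psi>) Ls)) (foldr (\<circ>) Ls id)"
proof (induction Ls)
  case (Cons G Ls)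
  have G: "quasi_decomp n Ofr (if G = \<Psi> then c else 1) G"
    using \<Psi> Cons.prems ch quasi_decomp_free[of G Ofr n] by auto
  show ?case
  proof (cases "Ls = []")
    case True
    then show ?thesis using G by (cases "G = \<Psi>") simp_all
  next
    case False
    have "quasi_decomp n Ofr (c ^ length (filter (\<lambda>G. G = \<Psi>) Ls)) (foldr (\<circ>) Ls id)"
      by (rule Cons.IH[OF False]) (use Cons.prems in simp)
    from quasi_decomp_comp[OF ch cl G this]
    have "quasi_decomp n Ofr (c ^ length (filter (\<lambda>H. H = \<Psi>) (G # Ls))) (G \<circ> foldr (\<circ>) Ls id)"
      by (cases "G = \<Psi>") simp_all
    moreover have "foldr (\<circ>) (G # Ls) id = G \<circ> foldr (\<circ>) Ls id" by (simp add: fun_eq_iff)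
    ultimately show ?thesis by (simp only:)
  qed
qed simp

lemma quasi_decomp_comps_k:
  assumes ch: "\<forall>G\<in>Ofr. channel n G" and cl: "closed_under_comp Ofr"
    and \<Psi>: "quasi_decomp n Ofr c \<Psi>" and c: "1 \<le> c" and \<Phi>: "\<Phi> \<in> comps_k Ofr \<Psi> k"
  shows "quasi_decomp n Ofr (c ^ k) \<Phi>"
proof -
  obtain Ls where Ls: "\<Phi> = foldr (\<circ>) Ls id" "Ls \<noteq> []" "set Ls \<subseteq> Ofr \<union> {\<Psi>}"
    "length (filter (\<lambda>G. G = \<Psi>) Ls) \<le> k"
    using \<Phi> unfolding comps_k_def by blast
  have "quasi_decomp n Ofr (c ^ length (filter (\<lambda>G. G = \<Psi>) Ls)) \<Phi>"
    unfolding Ls(1) by (rule quasi_decomp_foldr_comp[OF ch cl \<Psi> Ls(2,3)])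
  then show ?thesis by (rule quasi_decomp_mono) (rule power_increasing[OF Ls(4) c])
qed

lemma f_chan_quasi_decomp:
  assumes ch: "\<forall>G\<in>Ofr. channel n G" and \<Phi>: "quasi_decomp n Ofr c \<Phi>"
  shows "\<exists>L. set (map snd L) \<subseteq> Ofr \<and> sum_list (map fst L) = 1 \<and> sum_list (map (\<lambda>p. \<bar>fst p\<bar>) L) \<le> c \<and>
    (\<forall>x<qdim n. \<forall>y<qdim n. f_chan n \<Phi> (x, y) = sum_list (map (\<lambda>p. fst p * f_chan n (snd p) (x, y)) L))"
proof -
  obtain L where L: "set (map snd L) \<subseteq> Ofr" "sum_list (map fst L) = 1" "sum_list (map (\<lambda>p. \<bar>fst p\<bar>) L) \<le> c"
    "\<forall>X\<in>carrier_mat (qdim n) (qdim n). \<Phi> X \<in> carrier_mat (qdim n) (qdim n) \<and>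
        (\<forall>r<qdim n. \<forall>s<qdim n. \<Phi> X $$ (r, s) = lin_comb L X (r, s))"
    using \<Phi> unfolding quasi_decomp_def by blast
  show ?thesis
  proof (intro exI[of _ L] conjI allI impI L(1-3))
    fix x y assume x: "x < qdim n" and y: "y < qdim n"
    have "f_chan n \<Phi> (x, y) = Re (lin_comb L (basis_proj n x) (y, y))"
      unfolding f_chan_def using mtrace_mult_basis_proj[of "\<Phi> (basis_proj n x)" n y] L(4) y by simp
    also have "\<dots> = sum_list (map (\<lambda>p. fst p * f_chan n (snd p) (x, y)) L)"
      unfolding Re_lin_comb using L(1) ch f_chan_eq_diag[OF _ x y]
      by (intro arg_cong[where f=sum_list] map_cong) auto
    finally show "f_chan n \<Phi> (x, y) = sum_list (map (\<lambda>p. fst p * f_chan n (snd p) (x, y)) L)" .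
  qed
qed

subsection \<open>Rademacher complexity of affine combinations\<close>

lemma sum_list_mult_le_pos_neg_parts:
  fixes L :: "(real \<times> 'b) list"
  assumes "\<forall>p\<in>set L. X p \<le> B \<and> - X p \<le> A"
  shows "sum_list (map (\<lambda>p. fst p * X p) L)
    \<le> sum_list (map (\<lambda>p. max (fst p) 0) L) * B + sum_list (map (\<lambda>p. max (- fst p) 0) L) * A"
  using assms
proof (induction L)
  case (Cons p L)
  have h: "X p \<le> B" "- X p \<le> A" using Cons.prems by auto
  have "fst p * X p \<le> max (fst p) 0 * B + max (- fst p) 0 * A"
  proof (cases "fst p \<ge> 0")
    case True
    then show ?thesis using mult_left_mono[OF h(1) True] by simp
  next
    case False
    then have "fst p * X p = (- fst p) * (- X p)" by simp
    also have "\<dots> \<le> (- fst p) * A" using h False by (intro mult_left_mono) auto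
    finally show ?thesis using False by simp
  qed
  then show ?case using Cons by (simp add: distrib_right)
qed simp

text \<open>Split the coefficients into positive part \<open>P\<close> and negative part \<open>N\<close>: \<open>P - N = 1\<close> and
  \<open>P + N \<le> c\<close> give \<open>N \<le> (c - 1) / 2\<close>, and \<open>P B + N A = B + N (A + B)\<close>.\<close>

lemma sum_list_affine_le:
  fixes L :: "(real \<times> 'b) list"
  assumes sum1: "sum_list (map fst L) = 1" and l1: "sum_list (map (\<lambda>p. \<bar>fst p\<bar>) L) \<le> c"
    and bounds: "\<forall>p\<in>set L. X p \<le> B \<and> - X p \<le> A" and AB: "0 \<le> A + B"
  shows "sum_list (map (\<lambda>p. fst p * X p) L) \<le> B + (c - 1) / 2 * (A + B)"
proof -
  define P where "P = sum_list (map (\<lambda>p. max (fst p) 0) L)"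
  define N where "N = sum_list (map (\<lambda>p. max (- fst p) 0) L)"
  have "P - N = sum_list (map fst L)" "P + N = sum_list (map (\<lambda>p. \<bar>fst p\<bar>) L)" "0 \<le> N"
    unfolding P_def N_def by (induction L) (auto simp: max_def)
  then have P: "P = 1 + N" and N: "N \<le> (c - 1) / 2" "0 \<le> N" using sum1 l1 by auto
  have "sum_list (map (\<lambda>p. fst p * X p) L) \<le> P * B + N * A"
    unfolding P_def N_def by (rule sum_list_mult_le_pos_neg_parts[OF bounds])
  also have "\<dots> = B + N * (A + B)" unfolding P by (simp add: algebra_simps)
  also have "\<dots> \<le> B + (c - 1) / 2 * (A + B)" using N AB by (intro add_left_mono mult_right_mono) auto
  finally show ?thesis .
qed

lemma signed_mean_affine:
  fixes L :: "(real \<times> ('a \<Rightarrow> real)) list"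
  assumes \<sigma>: "length \<sigma> = m" and m: "m > 0"
    and h: "\<And>i. i < m \<Longrightarrow> h (S ! i) = 1 - sum_list (map (\<lambda>p. fst p * snd p (S ! i)) L)"
  shows "(\<Sum>i<m. \<sigma> ! i * h (S ! i)) / real m
    = (\<Sum>i<m. \<sigma> ! i) / real m
      + sum_list (map (\<lambda>p. fst p * ((\<Sum>i<m. map uminus \<sigma> ! i * snd p (S ! i)) / real m)) L)"
proof -
  have swap: "(\<Sum>i<m. sum_list (map (g i) L)) = sum_list (map (\<lambda>p. \<Sum>i<m. g i p) L)"
    for g :: "nat \<Rightarrow> real \<times> ('a \<Rightarrow> real) \<Rightarrow> real"
    by (induction L) (simp_all add: sum.distrib)
  have "(\<Sum>i<m. \<sigma> ! i * h (S ! i))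
      = (\<Sum>i<m. \<sigma> ! i - sum_list (map (\<lambda>p. \<sigma> ! i * (fst p * snd p (S ! i))) L))"
    by (intro sum.cong refl) (simp add: h right_diff_distrib sum_list_const_mult)
  also have "\<dots> = (\<Sum>i<m. \<sigma> ! i) - sum_list (map (\<lambda>p. \<Sum>i<m. \<sigma> ! i * (fst p * snd p (S ! i))) L)"
    by (simp add: sum_subtractf swap)
  also have "sum_list (map (\<lambda>p. \<Sum>i<m. \<sigma> ! i * (fst p * snd p (S ! i))) L)
      = - sum_list (map (\<lambda>p. fst p * (\<Sum>i<m. map uminus \<sigma> ! i * snd p (S ! i))) L)"
  proof -
    have "(\<Sum>i<m. \<sigma> ! i * (fst p * snd p (S ! i))) = - (fst p * (\<Sum>i<m. map uminus \<sigma> ! i * snd p (S ! i)))"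
      for p :: "real \<times> ('a \<Rightarrow> real)"
      using \<sigma> by (simp add: sum_distrib_left sum_negf[symmetric] mult_ac)
    then show ?thesis by (induction L) simp_all
  qed
  also have "sum_list (map (\<lambda>p. fst p * ((\<Sum>i<m. map uminus \<sigma> ! i * snd p (S ! i)) / real m)) L)
      = sum_list (map (\<lambda>p. fst p * (\<Sum>i<m. map uminus \<sigma> ! i * snd p (S ! i))) L) / real m"
    by (induction L) (simp_all add: add_divide_distrib)
  ultimately show ?thesis by (simp add: add_divide_distrib)
qed

definition affine_loss :: "('a \<Rightarrow> real) set \<Rightarrow> real \<Rightarrow> 'a set \<Rightarrow> ('a \<Rightarrow> real) \<Rightarrow> bool" where
  "affine_loss G c A h \<longleftrightarrow> (\<exists>L. set (map snd L) \<subseteq> G \<and> sum_list (map fst L) = 1 \<and>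
     sum_list (map (\<lambda>p. \<bar>fst p\<bar>) L) \<le> c \<and> (\<forall>z\<in>A. h z = 1 - sum_list (map (\<lambda>p. fst p * snd p z) L)))"

context unit_valued_class
begin

lemma rademacher_corr_affine_le:
  assumes C: "C \<noteq> {}"
    and affine: "\<forall>h\<in>C. affine_loss G c (set_pmf D) h"
    and \<sigma>: "\<sigma> \<in> sign_vectors m" and S: "length S = m" "set S \<subseteq> set_pmf D"
  shows "rademacher_corr m C \<sigma> S
    \<le> (\<Sum>i<m. \<sigma> ! i) / real m + rademacher_corr m G (map uminus \<sigma>) S
       + (c - 1) / 2 * (rademacher_corr m G \<sigma> S + rademacher_corr m G (map uminus \<sigma>) S)"
  unfolding rademacher_corr_def[of m C]
proof (rule cSUP_least[OF C])
  fix h assume "h \<in> C"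
  then obtain L :: "(real \<times> ('a \<Rightarrow> real)) list" where L: "set (map snd L) \<subseteq> G"
    "sum_list (map fst L) = 1" "sum_list (map (\<lambda>p. \<bar>fst p\<bar>) L) \<le> c"
    "\<forall>z\<in>set_pmf D. h z = 1 - sum_list (map (\<lambda>p. fst p * snd p z) L)"
    using affine unfolding affine_loss_def by blast
  define A where "A = rademacher_corr m G \<sigma> S"
  define B where "B = rademacher_corr m G (map uminus \<sigma>) S"
  define X where "X p = (\<Sum>i<m. map uminus \<sigma> ! i * snd p (S ! i)) / real m" for p :: "real \<times> ('a \<Rightarrow> real)"
  have l\<sigma>: "length \<sigma> = m" by (rule sign_vectors_length[OF \<sigma>])
  have mean: "(\<Sum>i<m. \<sigma> ! i * h (S ! i)) / real m = (\<Sum>i<m. \<sigma> ! i) / real m + sum_list (map (\<lambda>p. fst p * X p) L)"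
    unfolding X_def using L(4) S nth_mem by (intro signed_mean_affine[OF l\<sigma> sample_size_pos]) blast
  have bounds: "\<forall>p\<in>set L. X p \<le> B \<and> - X p \<le> A"
  proof
    fix p assume "p \<in> set L"
    then have f: "snd p \<in> G" using L(1) by auto
    have "- X p = (\<Sum>i<m. \<sigma> ! i * snd p (S ! i)) / real m"
      using l\<sigma> by (simp add: X_def sum_negf)
    then show "X p \<le> B \<and> - X p \<le> A"
      unfolding X_def A_def B_def
      using signed_mean_le_rademacher_corr[OF map_uminus_sign_vectors[OF \<sigma>] f S]
        signed_mean_le_rademacher_corr[OF \<sigma> f S] by simp
  qed
  have "0 \<le> A + B"
    unfolding A_def B_def by (rule rademacher_corr_add_uminus_nonneg[OF \<sigma> S])
  from sum_list_affine_le[OF L(2,3) bounds this]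
  show "(\<Sum>i<m. \<sigma> ! i * h (S ! i)) / real m \<le> (\<Sum>i<m. \<sigma> ! i) / real m + B + (c - 1) / 2 * (A + B)"
    unfolding mean by simp
qed

text \<open>Averaging over the signs, the constant term \<open>\<Sum>\<sigma>\<^sub>i / m\<close> cancels and both correlation terms
  average to the Rademacher complexity of \<open>G\<close>.\<close>

lemma rademacher_affine_le:
  assumes C: "C \<noteq> {}"
    and affine: "\<forall>h\<in>C. affine_loss G c (set_pmf D) h"
    and S: "length S = m" "set S \<subseteq> set_pmf D"
  shows "rademacher m C S \<le> c * rademacher m G S"
proof -
  define s where "s \<sigma> = (\<Sum>i<m. \<sigma> ! i) / real m" for \<sigma> :: "real list"
  define A where "A \<sigma> = rademacher_corr m G \<sigma> S" for \<sigma>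
  define B where "B \<sigma> = rademacher_corr m G (map uminus \<sigma>) S" for \<sigma>
  have s0: "(\<Sum>\<sigma>\<in>sign_vectors m. s \<sigma>) = 0"
  proof -
    have "(\<Sum>\<sigma>\<in>sign_vectors m. s (map uminus \<sigma>)) = - (\<Sum>\<sigma>\<in>sign_vectors m. s \<sigma>)"
      unfolding sum_negf[symmetric] using sign_vectors_length
      by (intro sum.cong refl) (simp add: s_def sum_negf)
    then show ?thesis using sum_sign_vectors_uminus[of s m] by simp
  qed
  have BA: "(\<Sum>\<sigma>\<in>sign_vectors m. B \<sigma>) = (\<Sum>\<sigma>\<in>sign_vectors m. A \<sigma>)"
    unfolding A_def B_def by (rule sum_sign_vectors_uminus)
  have "(\<Sum>\<sigma>\<in>sign_vectors m. rademacher_corr m C \<sigma> S)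
      \<le> (\<Sum>\<sigma>\<in>sign_vectors m. s \<sigma> + B \<sigma> + (c - 1) / 2 * (A \<sigma> + B \<sigma>))"
    unfolding s_def A_def B_def by (intro sum_mono rademacher_corr_affine_le[OF C affine _ S])
  also have "\<dots> = (\<Sum>\<sigma>\<in>sign_vectors m. s \<sigma>) + (\<Sum>\<sigma>\<in>sign_vectors m. B \<sigma>)
      + (c - 1) / 2 * ((\<Sum>\<sigma>\<in>sign_vectors m. A \<sigma>) + (\<Sum>\<sigma>\<in>sign_vectors m. B \<sigma>))"
    by (simp only: sum.distrib sum_distrib_left[symmetric])
  also have "\<dots> = c * (\<Sum>\<sigma>\<in>sign_vectors m. A \<sigma>)" unfolding s0 BA by (simp add: field_simps)
  finally show ?thesis
    unfolding rademacher_def A_def by (simp add: divide_right_mono)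
qed

end

lemma robustness_nonneg: "0 \<le> robustness n Ofr \<Phi>"
  unfolding robustness_def by (rule Inf_greatest) auto

lemma quasi_decomp_of_robustness_less:
  assumes \<Phi>: "channel n \<Phi>" and less: "robustness n Ofr \<Phi> < ereal l'"
  shows "quasi_decomp n Ofr (1 + 2 * l') \<Phi>"
proof -
  obtain l \<Phi>' where l: "0 \<le> l" "l < l'" "in_conv n Ofr \<Phi>'" "in_conv n Ofr (mix n \<Phi> l \<Phi>')"
    using less unfolding robustness_def Inf_less_iff by auto
  have "quasi_decomp n Ofr (1 + 2 * l) \<Phi>"
    using quasi_decomp_of_mix[OF _ l(1,3,4)] channel_carrier[OF \<Phi>] by blast
  then show ?thesis by (rule quasi_decomp_mono) (use l in simp)
qed

lemma robustness_le_gamma_max: "channel n \<Phi> \<Longrightarrow> robustness n Ofr \<Phi> \<le> gamma_max n Ofr"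
  unfolding gamma_max_def by (intro Sup_upper) auto

lemma le_of_forall_greater_tendsto:
  fixes f :: "real \<Rightarrow> real"
  assumes lim: "(f \<longlongrightarrow> f g) (at_right g)" and le: "\<And>l. l > g \<Longrightarrow> x \<le> f l"
  shows "x \<le> f g"
proof (rule tendsto_lowerbound[OF lim])
  show "\<forall>\<^sub>F l in at_right g. x \<le> f l"
    using eventually_at_right_less[of g] by eventually_elim (rule le)
qed simp

definition loss_class :: "nat \<Rightarrow> superop set \<Rightarrow> (nat \<times> nat \<Rightarrow> real) set" where
  "loss_class n C = (\<lambda>\<Phi> z. loss n z \<Phi>) ` C"

lemma er_S_eq_emp_mean: "length S = m \<Longrightarrow> er_S n S \<Phi> = emp_mean m (\<lambda>z. loss n z \<Phi>) S"
  by (simp add: er_S_def emp_mean_def)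

locale free_channel_learning =
  fixes n :: nat and Ofr :: "superop set" and D :: "(nat \<times> nat) pmf" and m :: nat
  assumes free_nonempty: "Ofr \<noteq> {}"
    and free_channels: "\<forall>\<Phi>\<in>Ofr. channel n \<Phi>"
    and free_closed: "closed_under_comp Ofr"
    and D_support: "set_pmf D \<subseteq> {..<qdim n} \<times> {..<qdim n}"
    and m_pos: "m > 0"
begin

lemma finite_support: "finite (set_pmf D)"
  by (rule finite_subset[OF D_support]) simp

lemma f_chan_unit_valued_on_support:
  "channel n \<Phi> \<Longrightarrow> z \<in> set_pmf D \<Longrightarrow> 0 \<le> f_chan n \<Phi> z \<and> f_chan n \<Phi> z \<le> 1"
  using f_chan_unit_valued[of n \<Phi> "fst z" "snd z"] D_support by auto

sublocale unit_valued_class D "fclass n Ofr" m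
  using finite_support free_nonempty free_channels m_pos f_chan_unit_valued_on_support
  by unfold_locales (auto simp: fclass_def)

lemma loss_class_unit_valued:
  assumes "C \<noteq> {}" "\<forall>\<Phi>\<in>C. channel n \<Phi>"
  shows "unit_valued_class D (loss_class n C) m"
  using assms finite_support m_pos f_chan_unit_valued_on_support
  by unfold_locales (auto simp: loss_class_def loss_def)

lemma rademacher_loss_class_le:
  assumes C: "C \<noteq> {}" and decomp: "\<forall>\<Phi>\<in>C. quasi_decomp n Ofr c \<Phi>"
    and S: "length S = m" "set S \<subseteq> set_pmf D"
  shows "rademacher m (loss_class n C) S \<le> c * rademacher m (fclass n Ofr) S"
proof (rule rademacher_affine_le[OF _ _ S])
  show "loss_class n C \<noteq> {}" using C by (simp add: loss_class_def)
  show "\<forall>h\<in>loss_class n C. affine_loss (fclass n Ofr) c (set_pmf D) h"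
  proof
    fix h assume "h \<in> loss_class n C"
    then obtain \<Phi> where \<Phi>: "\<Phi> \<in> C" "h = (\<lambda>z. loss n z \<Phi>)" by (auto simp: loss_class_def)
    obtain L where L: "set (map snd L) \<subseteq> Ofr" "sum_list (map fst L) = 1" "sum_list (map (\<lambda>p. \<bar>fst p\<bar>) L) \<le> c"
      "\<forall>x<qdim n. \<forall>y<qdim n. f_chan n \<Phi> (x, y) = sum_list (map (\<lambda>p. fst p * f_chan n (snd p) (x, y)) L)"
      using f_chan_quasi_decomp[OF free_channels] decomp \<Phi>(1) by blast
    show "affine_loss (fclass n Ofr) c (set_pmf D) h"
      unfolding affine_loss_def
    proof (intro exI[of _ "map (\<lambda>p. (fst p, f_chan n (snd p))) L"] conjI ballI)
      show "set (map snd (map (\<lambda>p. (fst p, f_chan n (snd p))) L)) \<subseteq> fclass n Ofr"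
        using L(1) by (auto simp: fclass_def)
      fix z assume z: "z \<in> set_pmf D"
      obtain x y where xy: "z = (x, y)" by fastforce
      have "x < qdim n" "y < qdim n" using z D_support xy by auto
      then show "h z = 1 - sum_list (map (\<lambda>p. fst p * snd p z) (map (\<lambda>p. (fst p, f_chan n (snd p))) L))"
        using L(4) \<Phi>(2) xy by (simp add: loss_def o_def)
    qed (use L(2,3) in \<open>simp_all add: o_def\<close>)
  qed
qed

lemma rademacher_loss_comps_k_le_robustness:
  assumes \<Psi>: "channel n \<Psi>" and rob: "robustness n Ofr \<Psi> = ereal g"
    and C: "comps_k Ofr \<Psi> k \<noteq> {}" and S: "length S = m" "set S \<subseteq> set_pmf D"
  shows "rademacher m (loss_class n (comps_k Ofr \<Psi> k)) S \<le> (1 + 2 * g) ^ k * rademacher m (fclass n Ofr) S"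
proof (rule le_of_forall_greater_tendsto[where f = "\<lambda>l. (1 + 2 * l) ^ k * rademacher m (fclass n Ofr) S"])
  show "((\<lambda>l. (1 + 2 * l) ^ k * rademacher m (fclass n Ofr) S) \<longlongrightarrow> (1 + 2 * g) ^ k * rademacher m (fclass n Ofr) S)
      (at_right g)"
    by (intro tendsto_intros)
  fix l assume "l > g"
  then have "quasi_decomp n Ofr (1 + 2 * l) \<Psi>" "0 \<le> l"
    using quasi_decomp_of_robustness_less[OF \<Psi>] rob robustness_nonneg[of n Ofr \<Psi>] by auto
  then have "\<forall>\<Phi>\<in>comps_k Ofr \<Psi> k. quasi_decomp n Ofr ((1 + 2 * l) ^ k) \<Phi>"
    using quasi_decomp_comps_k[OF free_channels free_closed] by simp
  from rademacher_loss_class_le[OF C this S]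
  show "rademacher m (loss_class n (comps_k Ofr \<Psi> k)) S \<le> (1 + 2 * l) ^ k * rademacher m (fclass n Ofr) S" .
qed

lemma rademacher_loss_le_gamma_max:
  assumes gm: "gamma_max n Ofr = ereal g"
    and C: "C \<noteq> {}" "\<forall>\<Phi>\<in>C. channel n \<Phi>" and S: "length S = m" "set S \<subseteq> set_pmf D"
  shows "rademacher m (loss_class n C) S \<le> (1 + 2 * g) * rademacher m (fclass n Ofr) S"
proof (rule le_of_forall_greater_tendsto[where f = "\<lambda>l. (1 + 2 * l) * rademacher m (fclass n Ofr) S"])
  show "((\<lambda>l. (1 + 2 * l) * rademacher m (fclass n Ofr) S) \<longlongrightarrow> (1 + 2 * g) * rademacher m (fclass n Ofr) S)
      (at_right g)"
    by (intro tendsto_intros)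
  fix l assume "l > g"
  have "\<forall>\<Phi>\<in>C. quasi_decomp n Ofr (1 + 2 * l) \<Phi>"
  proof
    fix \<Phi> assume \<Phi>: "\<Phi> \<in> C"
    then have "robustness n Ofr \<Phi> \<le> ereal g" using C(2) gm robustness_le_gamma_max by metis
    also have "ereal g < ereal l" using \<open>l > g\<close> by simp
    finally show "quasi_decomp n Ofr (1 + 2 * l) \<Phi>"
      using C(2) \<Phi> quasi_decomp_of_robustness_less by blast
  qed
  from rademacher_loss_class_le[OF C(1) this S]
  show "rademacher m (loss_class n C) S \<le> (1 + 2 * l) * rademacher m (fclass n Ofr) S" .
qed

lemma rademacher_loss_comps_k_le_gamma_star:
  assumes \<Psi>: "channel n \<Psi>" and rob: "robustness n Ofr \<Psi> < \<infinity>"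
    and C: "comps_k Ofr \<Psi> k \<noteq> {}" and S: "length S = m" "set S \<subseteq> set_pmf D"
  shows "rademacher m (loss_class n (comps_k Ofr \<Psi> k)) S
    \<le> real_of_ereal (gamma_star n Ofr \<Psi> k) * rademacher m (fclass n Ofr) S"
proof -
  obtain g where g: "robustness n Ofr \<Psi> = ereal g"
    using rob robustness_nonneg[of n Ofr \<Psi>] by (cases "robustness n Ofr \<Psi>") auto
  have channels: "\<forall>\<Phi>\<in>comps_k Ofr \<Psi> k. channel n \<Phi>"
    using channel_comps_k[OF free_channels \<Psi>] by blast
  have pow: "(1 + 2 * robustness n Ofr \<Psi>) ^ k = ereal ((1 + 2 * g) ^ k)"
  proof -
    have "1 + 2 * robustness n Ofr \<Psi> = ereal (1 + 2 * g)" by (simp add: g)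
    then show ?thesis by (simp only: ereal_power)
  qed
  note by_\<Psi> = rademacher_loss_comps_k_le_robustness[OF \<Psi> g C S]
  show ?thesis
  proof (cases "gamma_max n Ofr")
    case (real gm)
    have "gamma_star n Ofr \<Psi> k = ereal (min (1 + 2 * gm) ((1 + 2 * g) ^ k))"
      unfolding gamma_star_def real pow by (simp add: min_def)
    then show ?thesis
      using rademacher_loss_le_gamma_max[OF real C channels S] by_\<Psi> by (simp add: min_def)
  next
    case PInf
    then have "gamma_star n Ofr \<Psi> k = ereal ((1 + 2 * g) ^ k)"
      unfolding gamma_star_def pow by simp
    then show ?thesis using by_\<Psi> by simp
  next
    case MInf
    then show ?thesis using robustness_le_gamma_max[OF \<Psi>, of Ofr] g by simp
  qed
qed

lemma generalization_bound_of_uniform_deviation: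
  assumes \<Psi>: "channel n \<Psi>" and rob: "robustness n Ofr \<Psi> < \<infinity>" and C: "comps_k Ofr \<Psi> k \<noteq> {}"
    and S: "S \<in> set_pmf (iid_sample D m)" and \<Phi>: "\<Phi> \<in> comps_k Ofr \<Psi> k"
    and uniform: "\<forall>g\<in>loss_class n (comps_k Ofr \<Psi> k).
      expect D g \<le> emp_mean m g S + 2 * rademacher m (loss_class n (comps_k Ofr \<Psi> k)) S + t"
  shows "er_D n D \<Phi> \<le> er_S n S \<Phi>
    + 2 * real_of_ereal (gamma_star n Ofr \<Psi> k) * emp_rademacher (fclass n Ofr) S + t"
proof -
  have len: "length S = m" "set S \<subseteq> set_pmf D" using S set_pmf_iid_sample by blast+
  have "er_D n D \<Phi> \<le> er_S n S \<Phi> + 2 * rademacher m (loss_class n (comps_k Ofr \<Psi> k)) S + t"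
    using uniform \<Phi> by (auto simp: er_D_def er_S_eq_emp_mean[OF len(1)] loss_class_def)
  then show ?thesis
    using rademacher_loss_comps_k_le_gamma_star[OF \<Psi> rob C len]
    by (simp add: emp_rademacher_eq_rademacher[OF len(1)])
qed

end

theorem mainTheorem3:
  fixes n k m :: nat
    and Ofr :: "(complex mat \<Rightarrow> complex mat) set"
    and \<Psi> :: "complex mat \<Rightarrow> complex mat"
    and D :: "(nat \<times> nat) pmf"
    and \<delta> :: real
  assumes O_nonempty: "Ofr \<noteq> {}"
    and O_channels: "\<forall>\<Phi> \<in> Ofr. channel n \<Phi>"
    and O_closed: "closed_under_comp Ofr"
    and Psi_channel: "channel n \<Psi>"
    and Psi_finite: "robustness n Ofr \<Psi> < \<infinity>"
    and D_support: "set_pmf D \<subseteq> {..<qdim n} \<times> {..<qdim n}"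
    and delta: "0 < \<delta>" "\<delta> < 1"
    and m_pos: "m \<ge> 1"
  shows "measure_pmf.prob (iid_sample D m)
           {S. \<forall>\<Phi> \<in> comps_k Ofr \<Psi> k.
                 er_D n D \<Phi> \<le> er_S n S \<Phi>
                   + 2 * real_of_ereal (gamma_star n Ofr \<Psi> k) * emp_rademacher (fclass n Ofr) S
                   + 3 * sqrt (ln (2 / \<delta>) / (2 * real m))}
         \<ge> 1 - \<delta>"
proof (cases "comps_k Ofr \<Psi> k = {}")
  case True
  then show ?thesis using delta by simp
next
  case False
  let ?C = "comps_k Ofr \<Psi> k"
  interpret free_channel_learning n Ofr D m
    using O_nonempty O_channels O_closed D_support m_pos by unfold_locales auto
  interpret loss: unit_valued_class D "loss_class n ?C" m
    using loss_class_unit_valued[OF False] channel_comps_k[OF O_channels Psi_channel] by blast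
  show ?thesis
    using generalization_bound_of_uniform_deviation[OF Psi_channel Psi_finite False]
    by (intro order_trans[OF loss.uniform_deviation_bound[OF delta] measure_pmf_prob_mono_on_support]) blast
qed

end
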